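(* \[\sum_{d=0}^{\min\{m,n\}}\{SF_d\}_{\lambda_1\le n+m-2d}+\sum_{d=0}^{\min\{m,n\}-1}\{SF_d\}_{\lambda_1\le n+m-2d-1}=\sum_{r=0}^{\min\{m,n\}}SF_r .\]
   Context: Fix positive integers $n,m$. $\Lambda$ is the ring of symmetric functions with Schur functions $s_\lambda$ and complete homogeneous functions $h_k$. For $0\le d\le\min\{m,n\}$, $SF_d:=\sum_{\mu\vdash d}(s_\mu h_{n-d})\otimes(s_\mu h_{m-d})\in\Lambda\otimes\Lambda$. For $F=\sum_{\lambda,\mu}c_{\lambda,\mu}s_\lambda\otimes s_\mu$ and an integer $L$, $\{F\}_{\lambda_1\le L}:=\sum_{\lambda_1\le L,\ \mu_1\le L}c_{\lambda,\mu}s_\lambda\otimes s_\mu$. *)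

theory Defs
  imports "HOL-Library.Poly_Mapping" "HOL-Library.Function_Algebras"
begin

text \<open>Symmetric functions are modelled by their images in the ring of polynomials
in the N variables x_0, ..., x_(N-1) (with integer coefficients), for N at least the
relevant degree, where the restriction map is injective and sends s_lambda to the
Schur polynomial (zero if length lambda > N).\<close>

type_synonym poly = "(nat \<Rightarrow>\<^sub>0 nat) \<Rightarrow>\<^sub>0 int"

text \<open>Elements of the tensor product: coefficient functions on pairs of monomials.\<close>
type_synonym tens = "(nat \<Rightarrow>\<^sub>0 nat) \<times> (nat \<Rightarrow>\<^sub>0 nat) \<Rightarrow> int"

definition is_partition :: "nat list \<Rightarrow> bool" where
  "is_partition la \<longleftrightarrow> sorted_wrt (\<ge>) la \<and> (\<forall>x\<in>set la. 0 < x)"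

definition partitions_of :: "nat \<Rightarrow> nat list set" where
  "partitions_of d = {la. is_partition la \<and> sum_list la = d}"

definition part_first :: "nat list \<Rightarrow> nat" where
  "part_first la = (if la = [] then 0 else hd la)"

definition cells :: "nat list \<Rightarrow> (nat \<times> nat) set" where
  "cells la = {(i, j). i < length la \<and> j < la ! i}"

definition ssyt :: "nat \<Rightarrow> nat list \<Rightarrow> (nat \<times> nat \<Rightarrow> nat) set" where
  "ssyt N la = {T. (\<forall>c\<in>cells la. T c < N) \<and> (\<forall>c. c \<notin> cells la \<longrightarrow> T c = 0)
     \<and> (\<forall>i j. (i, Suc j) \<in> cells la \<longrightarrow> T (i, j) \<le> T (i, Suc j))
     \<and> (\<forall>i j. (Suc i, j) \<in> cells la \<longrightarrow> T (i, j) < T (Suc i, j))}"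

definition tab_monomial :: "nat list \<Rightarrow> (nat \<times> nat \<Rightarrow> nat) \<Rightarrow> (nat \<Rightarrow>\<^sub>0 nat)" where
  "tab_monomial la T = (\<Sum>c\<in>cells la. Poly_Mapping.single (T c) 1)"

definition schur :: "nat \<Rightarrow> nat list \<Rightarrow> poly" where
  "schur N la = (\<Sum>T\<in>ssyt N la. Poly_Mapping.single (tab_monomial la T) 1)"

definition hcomp :: "nat \<Rightarrow> nat \<Rightarrow> poly" where
  "hcomp N k = (\<Sum>a\<in>{a :: nat \<Rightarrow>\<^sub>0 nat. Poly_Mapping.keys a \<subseteq> {..<N} \<and> (\<Sum>i\<in>Poly_Mapping.keys a. Poly_Mapping.lookup a i) = k}.
                   Poly_Mapping.single a 1)"

definition tensor :: "poly \<Rightarrow> poly \<Rightarrow> tens" where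
  "tensor f g = (\<lambda>(a, b). Poly_Mapping.lookup f a * Poly_Mapping.lookup g b)"

definition SF :: "nat \<Rightarrow> nat \<Rightarrow> nat \<Rightarrow> nat \<Rightarrow> tens" where
  "SF N n m d = (\<Sum>mu\<in>partitions_of d.
       tensor (schur N mu * hcomp N (n - d)) (schur N mu * hcomp N (m - d)))"

definition schur_basis :: "nat \<Rightarrow> nat list set" where
  "schur_basis N = {la. is_partition la \<and> length la \<le> N}"

definition schur_term :: "nat \<Rightarrow> (nat list \<times> nat list \<Rightarrow> int) \<Rightarrow> nat list \<times> nat list \<Rightarrow> tens" where
  "schur_term N c p = (\<lambda>x. c p * tensor (schur N (fst p)) (schur N (snd p)) x)"

definition schur_expansion :: "nat \<Rightarrow> tens \<Rightarrow> (nat list \<times> nat list \<Rightarrow> int) \<Rightarrow> bool" where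
  "schur_expansion N F c \<longleftrightarrow> finite {p. c p \<noteq> 0}
     \<and> (\<forall>p. c p \<noteq> 0 \<longrightarrow> fst p \<in> schur_basis N \<and> snd p \<in> schur_basis N)
     \<and> F = (\<Sum>p\<in>{p. c p \<noteq> 0}. schur_term N c p)"

definition truncate :: "nat \<Rightarrow> nat \<Rightarrow> tens \<Rightarrow> tens" where
  "truncate N L F = (let c = (THE c. schur_expansion N F c) in
     (\<Sum>p\<in>{p. c p \<noteq> 0 \<and> part_first (fst p) \<le> L \<and> part_first (snd p) \<le> L}. schur_term N c p))"

end

theory Submission
  imports Defs "HOL-Library.FuncSet"
begin

text \<open>
  By the Pieri rule, s_mu h_k is the sum of the s_la with la/mu a horizontal strip of size k.
  Hence the coefficient of s_la \<otimes> s_nu in SF_d counts the partitions mu of d such that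
  la/mu and nu/mu are both horizontal strips. These mu form a box: the i-th part of mu ranges
  independently over [max la_(i+1) nu_(i+1), min la_i nu_i]. Reflecting every part inside its
  interval is an involution of the box sending |mu| to S - |mu|, where S = n + m - max la_1 nu_1,
  so the sizes of the mu are distributed symmetrically about S/2. The two truncations keep exactly
  the d with 2d \<le> S and with 2d < S, and by the symmetry these two ranges together count every
  mu once. Schur tensors in N \<ge> max n m variables are linearly independent (Kostka numbers are
  unitriangular for dominance), so the Schur expansion chosen by truncate is the unique one and
  the identity can be checked coefficientwise.

  The Pieri rule is proved for Kostka numbers by induction on the number of variables: removing
  the largest entry is the branching rule, and the induction step has to commute removing and
  adding a horizontal strip, which is again the symmetry of the box.
\<close>

section \<open>Horizontal strips and the box of common inner strips\<close>

definition hstrip :: "(nat \<Rightarrow> nat) \<Rightarrow> (nat \<Rightarrow> nat) \<Rightarrow> bool" where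
  "hstrip la mu \<longleftrightarrow> (\<forall>i. la (Suc i) \<le> mu i \<and> mu i \<le> la i)"

definition vanishes_from :: "nat \<Rightarrow> (nat \<Rightarrow> nat) \<Rightarrow> bool" where
  "vanishes_from L f \<longleftrightarrow> (\<forall>i\<ge>L. f i = 0)"

definition psize :: "nat \<Rightarrow> (nat \<Rightarrow> nat) \<Rightarrow> nat" where
  "psize L f = sum f {..<L}"

definition strip_box :: "(nat \<Rightarrow> nat) \<Rightarrow> (nat \<Rightarrow> nat) \<Rightarrow> (nat \<Rightarrow> nat) set" where
  "strip_box A B = {k. hstrip A k \<and> hstrip B k}"

lemma finite_bounded_funs:
  "finite {f :: nat \<Rightarrow> nat. (\<forall>i. f i \<le> C) \<and> vanishes_from L f}"
proof -
  let ?S = "{xs :: nat list. set xs \<subseteq> {..C} \<and> length xs = L}"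
  have "finite ?S" by (rule finite_lists_length_eq) auto
  moreover have "inj_on (\<lambda>f. map f [0..<L]) {f :: nat \<Rightarrow> nat. (\<forall>i. f i \<le> C) \<and> vanishes_from L f}"
  proof (rule inj_onI)
    fix f g assume f: "f \<in> {f :: nat \<Rightarrow> nat. (\<forall>i. f i \<le> C) \<and> vanishes_from L f}"
      and g: "g \<in> {f :: nat \<Rightarrow> nat. (\<forall>i. f i \<le> C) \<and> vanishes_from L f}"
      and e: "map f [0..<L] = map g [0..<L]"
    show "f = g"
    proof
      fix i show "f i = g i"
      proof (cases "i < L")
        case True then show ?thesis using e by (metis map_eq_conv atLeastLessThan_iff set_upt zero_le)
      next
        case False then show ?thesis using f g by (auto simp: vanishes_from_def)
      qed
    qed
  qed
  moreover have "(\<lambda>f. map f [0..<L]) ` {f :: nat \<Rightarrow> nat. (\<forall>i. f i \<le> C) \<and> vanishes_from L f} \<subseteq> ?S"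
    by auto
  ultimately show ?thesis by (meson finite_imageD finite_subset)
qed

lemma le_psize: "i < L \<Longrightarrow> f i \<le> psize L f"
  unfolding psize_def by (rule member_le_sum) auto

lemma vanishes_from_le: "vanishes_from L A \<Longrightarrow> \<forall>i. k i \<le> A i \<Longrightarrow> vanishes_from L k"
  unfolding vanishes_from_def by (metis le_zero_eq)

lemma finite_pointwise_le:
  assumes "vanishes_from L A"
  shows "finite {k. \<forall>i. k i \<le> A i}"
proof -
  have "{k. \<forall>i. k i \<le> A i} \<subseteq> {f. (\<forall>i. f i \<le> psize L A) \<and> vanishes_from L f}"
  proof safe
    fix k i assume k: "\<forall>i. k i \<le> A i"
    show "k i \<le> psize L A"
    proof (cases "i < L")
      case True then show ?thesis using k le_psize order_trans by blast
    next
      case False then show ?thesis using k assms by (auto simp: vanishes_from_def) (metis le_zero_eq not_le zero_le)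
    qed
  next
    fix k assume "\<forall>i. k i \<le> A i" then show "vanishes_from L k" using vanishes_from_le assms by blast
  qed
  then show ?thesis using finite_bounded_funs finite_subset by blast
qed

lemma strip_box_le: "k \<in> strip_box A B \<Longrightarrow> k i \<le> A i \<and> k i \<le> B i"
  by (auto simp: strip_box_def hstrip_def)

lemma finite_strip_box: "vanishes_from L A \<Longrightarrow> finite (strip_box A B)"
  by (rule finite_subset[OF _ finite_pointwise_le[of L A]]) (auto dest: strip_box_le)

definition box_lo :: "(nat \<Rightarrow> nat) \<Rightarrow> (nat \<Rightarrow> nat) \<Rightarrow> nat \<Rightarrow> nat" where
  "box_lo A B i = max (A (Suc i)) (B (Suc i))"
definition box_hi :: "(nat \<Rightarrow> nat) \<Rightarrow> (nat \<Rightarrow> nat) \<Rightarrow> nat \<Rightarrow> nat" where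
  "box_hi A B i = min (A i) (B i)"

lemma strip_box_iff: "k \<in> strip_box A B \<longleftrightarrow> (\<forall>i. box_lo A B i \<le> k i \<and> k i \<le> box_hi A B i)"
  by (auto simp: strip_box_def hstrip_def box_lo_def box_hi_def)

lemma sum_box_lo_hi_telescope:
  "(\<Sum>i<L. box_lo A B i + box_hi A B i) + max (A 0) (B 0) = (\<Sum>i<L. A i + B i) + max (A L) (B L)"
  by (induction L) (auto simp: box_lo_def box_hi_def)

lemma sum_box_lo_hi:
  assumes "vanishes_from L A" "vanishes_from L B"
  shows "(\<Sum>i<L. box_lo A B i + box_hi A B i) = psize L A + psize L B - max (A 0) (B 0)"
  using sum_box_lo_hi_telescope[where L=L and A=A and B=B] assms by (simp add: vanishes_from_def psize_def sum.distrib)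

definition box_reflect :: "(nat \<Rightarrow> nat) \<Rightarrow> (nat \<Rightarrow> nat) \<Rightarrow> (nat \<Rightarrow> nat) \<Rightarrow> (nat \<Rightarrow> nat)" where
  "box_reflect A B k = (\<lambda>i. box_lo A B i + box_hi A B i - k i)"

lemma box_reflect_in: "k \<in> strip_box A B \<Longrightarrow> box_reflect A B k \<in> strip_box A B"
  unfolding strip_box_iff box_reflect_def
proof (intro allI)
  fix i assume "\<forall>i. box_lo A B i \<le> k i \<and> k i \<le> box_hi A B i"
  then have "box_lo A B i \<le> k i" "k i \<le> box_hi A B i" by auto
  then show "box_lo A B i \<le> box_lo A B i + box_hi A B i - k i \<and> box_lo A B i + box_hi A B i - k i \<le> box_hi A B i" by arith
qed

lemma box_reflect_box_reflect: "k \<in> strip_box A B \<Longrightarrow> box_reflect A B (box_reflect A B k) = k"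
proof
  fix i assume k: "k \<in> strip_box A B"
  then have "box_lo A B i \<le> k i" "k i \<le> box_hi A B i" by (auto simp: strip_box_iff)
  then show "box_reflect A B (box_reflect A B k) i = k i" by (simp add: box_reflect_def)
qed

lemma psize_box_reflect:
  assumes "k \<in> strip_box A B" "vanishes_from L A" "vanishes_from L B"
  shows "psize L (box_reflect A B k) = psize L A + psize L B - max (A 0) (B 0) - psize L k"
proof -
  have le: "\<And>i. i \<in> {..<L} \<Longrightarrow> k i \<le> box_lo A B i + box_hi A B i" using assms(1) by (auto simp: strip_box_iff) (meson le_trans trans_le_add2)
  have "psize L (box_reflect A B k) = (\<Sum>i<L. box_lo A B i + box_hi A B i) - psize L k"
    unfolding psize_def box_reflect_def by (rule sum_subtractf_nat[OF le])
  then show ?thesis using sum_box_lo_hi[OF assms(2,3)] by simp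
qed

lemma psize_strip_box_le:
  assumes "k \<in> strip_box A B" "vanishes_from L A" "vanishes_from L B"
  shows "psize L k \<le> psize L A + psize L B - max (A 0) (B 0)"
  using psize_box_reflect[OF assms] psize_box_reflect[OF box_reflect_in[OF assms(1)] assms(2,3)] box_reflect_box_reflect[OF assms(1)]
  by (metis diff_le_self)

lemma psize_strip_box_le_sides:
  assumes "k \<in> strip_box A B"
  shows "psize L k \<le> psize L A" "psize L k \<le> psize L B"
  using strip_box_le[OF assms] unfolding psize_def by (auto intro: sum_mono)

lemma card_strip_box_reflect:
  assumes "vanishes_from L A" "vanishes_from L B"
  shows "card {k\<in>strip_box A B. P (psize L k)} = card {k\<in>strip_box A B. P (psize L A + psize L B - max (A 0) (B 0) - psize L k)}"
proof -
  let ?S = "psize L A + psize L B - max (A 0) (B 0)"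
  let ?X = "{k\<in>strip_box A B. P (psize L k)}" and ?Y = "{k\<in>strip_box A B. P (?S - psize L k)}"
  have inj: "inj_on (box_reflect A B) ?Y" by (rule inj_on_inverseI[where g="box_reflect A B"]) (auto simp: box_reflect_box_reflect)
  have "box_reflect A B ` ?Y = ?X"
  proof
    show "box_reflect A B ` ?Y \<subseteq> ?X" using psize_box_reflect assms box_reflect_in by auto
  next
    show "?X \<subseteq> box_reflect A B ` ?Y"
    proof
      fix k assume k: "k \<in> ?X"
      have "?S - (?S - psize L k) = psize L k" using psize_strip_box_le[of k A B L] k assms by auto
      then have "box_reflect A B k \<in> ?Y"
        using k psize_box_reflect[of k A B L] assms box_reflect_in psize_strip_box_le[of k A B L] by auto
      then show "k \<in> box_reflect A B ` ?Y" using box_reflect_box_reflect k by (metis (no_types, lifting) image_eqI mem_Collect_eq)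
    qed
  qed
  then show ?thesis using card_image[OF inj] by simp
qed

lemma card_strip_box_halves:
  assumes "vanishes_from L A" "vanishes_from L B"
  defines "S \<equiv> psize L A + psize L B - max (A 0) (B 0)"
  shows "card {k\<in>strip_box A B. 2 * psize L k \<le> S} + card {k\<in>strip_box A B. 2 * psize L k < S}
    = card (strip_box A B)"
proof -
  let ?X = "strip_box A B"
  have le: "psize L k \<le> S" if "k \<in> ?X" for k
    using psize_strip_box_le[OF that assms(1,2)] by (simp add: S_def)
  have "card {k\<in>?X. 2 * psize L k < S} = card {k\<in>?X. 2 * (S - (S - psize L k)) < S}"
    by (intro arg_cong[where f=card] Collect_cong conj_cong refl) (drule le, arith)
  also have "\<dots> = card {k\<in>?X. 2 * (S - psize L k) < S}"
    using card_strip_box_reflect[OF assms(1,2), of "\<lambda>s. 2 * (S - s) < S"] by (simp add: S_def)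
  also have "\<dots> = card {k\<in>?X. S < 2 * psize L k}"
    by (intro arg_cong[where f=card] Collect_cong conj_cong refl) (drule le, arith)
  finally have "card {k\<in>?X. 2 * psize L k < S} = card {k\<in>?X. S < 2 * psize L k}" .
  moreover have "card {k\<in>?X. 2 * psize L k \<le> S} + card {k\<in>?X. S < 2 * psize L k} = card ?X"
    using finite_strip_box[OF assms(1)]
    by (subst card_Un_disjoint[symmetric]) (auto intro: arg_cong[where f=card])
  ultimately show ?thesis by simp
qed

section \<open>Tableaux and the branching rule\<close>

text \<open>Partitions are functions nat \<Rightarrow> nat that are antitone and vanish from some index on;
  tableaux are total functions on cells that are 0 outside the diagram.\<close>

definition diagram :: "(nat \<Rightarrow> nat) \<Rightarrow> (nat \<times> nat) set" where
  "diagram f = {(i, j). j < f i}"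

definition tableaux :: "nat \<Rightarrow> (nat \<Rightarrow> nat) \<Rightarrow> (nat \<times> nat \<Rightarrow> nat) set" where
  "tableaux N la = {T. (\<forall>c\<in>diagram la. T c < N) \<and> (\<forall>c. c \<notin> diagram la \<longrightarrow> T c = 0)
     \<and> (\<forall>i j. (i, Suc j) \<in> diagram la \<longrightarrow> T (i, j) \<le> T (i, Suc j))
     \<and> (\<forall>i j. (Suc i, j) \<in> diagram la \<longrightarrow> T (i, j) < T (Suc i, j))}"

definition content :: "(nat \<Rightarrow> nat) \<Rightarrow> (nat \<times> nat \<Rightarrow> nat) \<Rightarrow> nat \<Rightarrow> nat" where
  "content la T v = card {c\<in>diagram la. T c = v}"

definition kostka :: "nat \<Rightarrow> (nat \<Rightarrow> nat) \<Rightarrow> (nat \<Rightarrow> nat) \<Rightarrow> nat" where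
  "kostka N la a = card {T\<in>tableaux N la. \<forall>v<N. content la T v = a v}"

definition partition_fun :: "nat \<Rightarrow> (nat \<Rightarrow> nat) \<Rightarrow> bool" where
  "partition_fun L f \<longleftrightarrow> vanishes_from L f \<and> (\<forall>i. f (Suc i) \<le> f i)"

lemma diagram_eq_Sigma: "vanishes_from L f \<Longrightarrow> diagram f = Sigma {..<L} (\<lambda>i. {..<f i})"
proof safe
  fix i j assume b: "vanishes_from L f" and "(i, j) \<in> diagram f"
  then have "j < f i" by (simp add: diagram_def)
  then show "i < L" using b unfolding vanishes_from_def by (metis not_less0 not_le)
qed (auto simp: diagram_def)

lemma finite_diagram: "vanishes_from L f \<Longrightarrow> finite (diagram f)"
  by (simp add: diagram_eq_Sigma)

lemma card_diagram: "vanishes_from L f \<Longrightarrow> card (diagram f) = psize L f"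
  by (simp add: diagram_eq_Sigma card_SigmaI psize_def)

lemma diagram_mono: "\<forall>i. k i \<le> f i \<Longrightarrow> diagram k \<subseteq> diagram f"
  by (auto simp: diagram_def) (meson less_le_trans)

lemma diagram_inj: "diagram k = diagram f \<Longrightarrow> k = f"
proof
  fix i assume e: "diagram k = diagram f"
  have "\<forall>j. j < k i \<longleftrightarrow> j < f i" using e by (auto simp: diagram_def set_eq_iff)
  then show "k i = f i" by (meson linorder_neqE_nat less_irrefl)
qed

lemma finite_tableaux:
  assumes "vanishes_from L la" shows "finite (tableaux N la)"
proof -
  let ?C = "diagram la"
  have fin: "finite (Pi\<^sub>E ?C (\<lambda>_. {..<N}))" using finite_diagram[OF assms] by (simp add: finite_PiE)
  have inj: "inj_on (\<lambda>T. restrict T ?C) (tableaux N la)"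
  proof (rule inj_onI)
    fix S T assume S: "S \<in> tableaux N la" and T: "T \<in> tableaux N la" and e: "restrict S ?C = restrict T ?C"
    show "S = T"
    proof
      fix c show "S c = T c"
      proof (cases "c \<in> ?C")
        case True then show ?thesis using e by (metis restrict_apply')
      next
        case False
        have "S c = 0" "T c = 0" using S T False unfolding tableaux_def by blast+
        then show ?thesis by simp
      qed
    qed
  qed
  have "(\<lambda>T. restrict T ?C) ` tableaux N la \<subseteq> Pi\<^sub>E ?C (\<lambda>_. {..<N})"
    by (auto simp: tableaux_def)
  then show ?thesis using inj fin by (meson finite_imageD finite_subset)
qed

lemma tableaux_outside: "T \<in> tableaux N la \<Longrightarrow> c \<notin> diagram la \<Longrightarrow> T c = 0"
  unfolding tableaux_def by blast

lemma tableau_row_mono: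
  assumes "T \<in> tableaux N la" "(i, j) \<in> diagram la" "j' \<le> j"
  shows "T (i, j') \<le> T (i, j)"
  using assms(3,2)
proof (induction j rule: dec_induct)
  case base then show ?case by simp
next
  case (step j)
  have "(i, j) \<in> diagram la" using step.prems by (auto simp: diagram_def)
  then have "T (i, j') \<le> T (i, j)" using step.IH by simp
  also have "\<dots> \<le> T (i, Suc j)" using assms(1) step.prems by (auto simp: tableaux_def)
  finally show ?case .
qed

lemma tableau_col_ge:
  assumes "T \<in> tableaux N la" "\<forall>i. la (Suc i) \<le> la i" "(i, j) \<in> diagram la"
  shows "i \<le> T (i, j)"
  using assms(3)
proof (induction i)
  case 0 then show ?case by simp
next
  case (Suc i)
  have "(i, j) \<in> diagram la" using Suc.prems assms(2) by (auto simp: diagram_def) (meson less_le_trans)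
  then have "i \<le> T (i, j)" using Suc.IH by simp
  also have "\<dots> < T (Suc i, j)" using assms(1) Suc.prems by (auto simp: tableaux_def)
  finally show ?case by simp
qed

lemma kostka_cong: "\<forall>v<N. a v = b v \<Longrightarrow> kostka N la a = kostka N la b"
  unfolding kostka_def by metis

lemma kostka_0: "kostka 0 la a = (if (\<forall>i. la i = 0) then 1 else 0)"
proof (cases "\<forall>i. la i = 0")
  case True
  then have "diagram la = {}" by (simp add: diagram_def)
  then have "tableaux 0 la = {(\<lambda>_. 0)}" by (auto simp: tableaux_def)
  then show ?thesis using True by (simp add: kostka_def)
next
  case False
  then obtain i where "la i \<noteq> 0" by blast
  then have "(i, 0) \<in> diagram la" by (simp add: diagram_def)
  then have "tableaux 0 la = {}" by (auto simp: tableaux_def)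
  then show ?thesis using False by (simp add: kostka_def)
qed

definition extend_tableau :: "(nat \<Rightarrow> nat) \<Rightarrow> (nat \<Rightarrow> nat) \<Rightarrow> nat \<Rightarrow> (nat \<times> nat \<Rightarrow> nat) \<Rightarrow> (nat \<times> nat \<Rightarrow> nat)" where
  "extend_tableau la ka N T' c = (if c \<in> diagram ka then T' c else if c \<in> diagram la then N else 0)"

definition inner_strips :: "nat \<Rightarrow> (nat \<Rightarrow> nat) \<Rightarrow> nat \<Rightarrow> (nat \<Rightarrow> nat) set" where
  "inner_strips L la e = {ka. hstrip la ka \<and> psize L ka + e = psize L la}"

lemma downclosed_eq_lessThan:
  assumes "finite S" "\<forall>j\<in>S. \<forall>j'\<le>j. j' \<in> S"
  shows "S = {..<card S}"
proof (cases "S = {}")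
  case True then show ?thesis by simp
next
  case False
  let ?M = "Max S"
  have "?M \<in> S" using Max_in[OF assms(1) False] .
  have "S = {..?M}"
  proof
    show "S \<subseteq> {..?M}" using Max_ge[OF assms(1)] by auto
    show "{..?M} \<subseteq> S" using assms(2) \<open>?M \<in> S\<close> by auto
  qed
  then show ?thesis by (metis card_atMost lessThan_Suc_atMost)
qed

lemma hstrip_le: "hstrip la ka \<Longrightarrow> ka i \<le> la i"
  by (simp add: hstrip_def)

lemma hstrip_partition_fun: "hstrip la ka \<Longrightarrow> vanishes_from L la \<Longrightarrow> partition_fun L ka"
  unfolding partition_fun_def hstrip_def by (meson vanishes_from_le le_trans)

lemma finite_inner_strips: "vanishes_from L la \<Longrightarrow> finite (inner_strips L la e)"
  by (rule finite_subset[OF _ finite_pointwise_le[of L la]]) (auto simp: inner_strips_def hstrip_def)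

lemma card_diagram_diff:
  assumes "vanishes_from L la" "\<forall>i. ka i \<le> la i"
  shows "card (diagram la - diagram ka) = psize L la - psize L ka"
proof -
  have b: "vanishes_from L ka" using vanishes_from_le assms by blast
  have "card (diagram la - diagram ka) = card (diagram la) - card (diagram ka)"
    using card_Diff_subset[OF finite_diagram[OF b] diagram_mono[OF assms(2)]] .
  then show ?thesis using card_diagram assms b by simp
qed

context
  fixes L N :: nat and la a :: "nat \<Rightarrow> nat"
  assumes pla: "partition_fun L la"
begin

lemma extend_tableau_in_tableaux:
  assumes strip: "hstrip la ka" and T: "T \<in> tableaux N ka"
  shows "extend_tableau la ka N T \<in> tableaux (Suc N) la"
proof -
  let ?E = "extend_tableau la ka N T"
  have sub: "diagram ka \<subseteq> diagram la" using strip by (intro diagram_mono) (simp add: hstrip_def)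
  have T_less: "\<forall>c\<in>diagram ka. T c < N" using T by (simp add: tableaux_def)
  show ?thesis unfolding tableaux_def
  proof (intro CollectI conjI allI ballI impI)
    fix c assume "c \<in> diagram la"
    then show "?E c < Suc N" using T_less by (auto simp: extend_tableau_def less_Suc_eq)
  next
    fix c assume "c \<notin> diagram la"
    then show "?E c = 0" using sub by (auto simp: extend_tableau_def)
  next
    fix i j assume c: "(i, Suc j) \<in> diagram la"
    show "?E (i, j) \<le> ?E (i, Suc j)"
    proof (cases "(i, Suc j) \<in> diagram ka")
      case True
      then have "(i, j) \<in> diagram ka" by (auto simp: diagram_def)
      then show ?thesis using True T by (simp add: extend_tableau_def tableaux_def)
    next
      case False
      have "(i, j) \<in> diagram la" using c by (auto simp: diagram_def)
      then have "?E (i, j) \<le> N" using T_less by (auto simp: extend_tableau_def less_imp_le)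
      then show ?thesis using False c by (simp add: extend_tableau_def)
    qed
  next
    fix i j assume c: "(Suc i, j) \<in> diagram la"
    have "(i, j) \<in> diagram ka"
      using c strip by (auto simp: diagram_def hstrip_def intro: less_le_trans)
    then show "?E (i, j) < ?E (Suc i, j)"
      using c T T_less by (cases "(Suc i, j) \<in> diagram ka") (simp_all add: extend_tableau_def tableaux_def)
  qed
qed

lemma content_extend_tableau:
  assumes ka: "ka \<in> inner_strips L la (a N)" and T: "T \<in> tableaux N ka" "\<forall>v<N. content ka T v = a v"
    and v: "v < Suc N"
  shows "content la (extend_tableau la ka N T) v = a v"
proof -
  have le: "\<forall>i. ka i \<le> la i" using ka by (simp add: inner_strips_def hstrip_def)
  have sub: "diagram ka \<subseteq> diagram la" using diagram_mono[OF le] .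
  have T_less: "\<forall>c\<in>diagram ka. T c < N" using T(1) by (simp add: tableaux_def)
  show ?thesis
  proof (cases "v < N")
    case True
    have "{c\<in>diagram la. extend_tableau la ka N T c = v} = {c\<in>diagram ka. T c = v}"
      using sub True by (auto simp: extend_tableau_def)
    then show ?thesis using T(2) True by (simp add: content_def)
  next
    case False
    then have "{c\<in>diagram la. extend_tableau la ka N T c = v} = diagram la - diagram ka"
      using sub T_less v by (auto simp: extend_tableau_def)
    then have "content la (extend_tableau la ka N T) v = psize L la - psize L ka"
      using card_diagram_diff[OF _ le] pla by (simp add: content_def partition_fun_def)
    then show ?thesis using ka False v by (auto simp: inner_strips_def less_Suc_eq)
  qed
qed

definition lower_shape :: "(nat \<times> nat \<Rightarrow> nat) \<Rightarrow> nat \<Rightarrow> nat" where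
  "lower_shape T i = card {j. j < la i \<and> T (i, j) < N}"

definition lower_tableau :: "(nat \<times> nat \<Rightarrow> nat) \<Rightarrow> (nat \<times> nat \<Rightarrow> nat)" where
  "lower_tableau T c = (if c \<in> diagram (lower_shape T) then T c else 0)"

lemma diagram_lower_shape:
  assumes T: "T \<in> tableaux (Suc N) la"
  shows "diagram (lower_shape T) = {c\<in>diagram la. T c < N}"
proof -
  have "{j. j < la i \<and> T (i, j) < N} = {..<lower_shape T i}" for i
    unfolding lower_shape_def
  proof (rule downclosed_eq_lessThan)
    show "finite {j. j < la i \<and> T (i, j) < N}" by simp
    show "\<forall>j\<in>{j. j < la i \<and> T (i, j) < N}. \<forall>j'\<le>j. j' \<in> {j. j < la i \<and> T (i, j) < N}"
    proof (intro ballI allI impI)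
      fix j j' assume j: "j \<in> {j. j < la i \<and> T (i, j) < N}" and "j' \<le> j"
      then have "T (i, j') \<le> T (i, j)" using tableau_row_mono[OF T, of i j j'] by (simp add: diagram_def)
      then show "j' \<in> {j. j < la i \<and> T (i, j) < N}" using j \<open>j' \<le> j\<close> by auto
    qed
  qed
  then show ?thesis by (auto simp: diagram_def set_eq_iff)
qed

lemma lower_shape_hstrip:
  assumes T: "T \<in> tableaux (Suc N) la"
  shows "hstrip la (lower_shape T)"
proof -
  have "lower_shape T i \<le> la i" for i
  proof -
    have "{j. j < la i \<and> T (i, j) < N} \<subseteq> {..<la i}" by auto
    then show ?thesis unfolding lower_shape_def by (metis card_lessThan card_mono finite_lessThan)
  qed
  moreover have "la (Suc i) \<le> lower_shape T i" for i
  proof -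
    have "j < lower_shape T i" if j: "j < la (Suc i)" for j
    proof -
      have below: "(Suc i, j) \<in> diagram la" using j by (simp add: diagram_def)
      have "la (Suc i) \<le> la i" using pla by (simp add: partition_fun_def)
      then have "(i, j) \<in> diagram la" using j by (simp add: diagram_def)
      moreover have "T (i, j) < T (Suc i, j)" and "T (Suc i, j) < Suc N"
        using T below by (auto simp: tableaux_def)
      ultimately have "(i, j) \<in> diagram (lower_shape T)" using diagram_lower_shape[OF T] by simp
      then show ?thesis by (simp add: diagram_def)
    qed
    then show ?thesis by (meson not_le less_irrefl)
  qed
  ultimately show ?thesis by (simp add: hstrip_def)
qed

lemma lower_shape_in_inner_strips:
  assumes T: "T \<in> tableaux (Suc N) la" "\<forall>v<Suc N. content la T v = a v"
  shows "lower_shape T \<in> inner_strips L la (a N)"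
proof -
  let ?k = "lower_shape T"
  have le: "\<forall>i. ?k i \<le> la i" using hstrip_le[OF lower_shape_hstrip[OF T(1)]] by blast
  have "diagram la - diagram ?k = {c\<in>diagram la. T c = N}"
    using diagram_lower_shape[OF T(1)] T(1) by (auto simp: tableaux_def less_Suc_eq)
  then have "psize L la - psize L ?k = a N"
    using card_diagram_diff[of L la ?k] pla le T(2) by (simp add: partition_fun_def content_def)
  moreover have "psize L ?k \<le> psize L la" unfolding psize_def by (rule sum_mono) (simp add: le)
  ultimately show ?thesis using lower_shape_hstrip[OF T(1)] by (simp add: inner_strips_def)
qed

lemma lower_tableau_in_tableaux:
  assumes T: "T \<in> tableaux (Suc N) la"
  shows "lower_tableau T \<in> tableaux N (lower_shape T)"
proof -
  let ?k = "lower_shape T"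
  have k: "diagram ?k = {c\<in>diagram la. T c < N}" by (rule diagram_lower_shape[OF T])
  have strip: "hstrip la ?k" by (rule lower_shape_hstrip[OF T])
  have col: "(i, j) \<in> diagram ?k" if "(Suc i, j) \<in> diagram ?k" for i j
  proof -
    have "j < ?k (Suc i)" using that by (simp add: diagram_def)
    also have "\<dots> \<le> la (Suc i)" using strip by (simp add: hstrip_def)
    also have "\<dots> \<le> ?k i" using strip by (simp add: hstrip_def)
    finally show ?thesis by (simp add: diagram_def)
  qed
  have row: "(i, j) \<in> diagram ?k" if "(i, Suc j) \<in> diagram ?k" for i j
    using that by (simp add: diagram_def)
  show ?thesis unfolding tableaux_def
  proof (intro CollectI conjI allI ballI impI)
    fix c assume "c \<in> diagram ?k"
    then show "lower_tableau T c < N" using k by (simp add: lower_tableau_def)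
  next
    fix c assume "c \<notin> diagram ?k"
    then show "lower_tableau T c = 0" by (simp add: lower_tableau_def)
  next
    fix i j assume c: "(i, Suc j) \<in> diagram ?k"
    then have "(i, Suc j) \<in> diagram la" using k by blast
    then show "lower_tableau T (i, j) \<le> lower_tableau T (i, Suc j)"
      using c row[OF c] T by (simp add: lower_tableau_def tableaux_def)
  next
    fix i j assume c: "(Suc i, j) \<in> diagram ?k"
    then have "(Suc i, j) \<in> diagram la" using k by blast
    then show "lower_tableau T (i, j) < lower_tableau T (Suc i, j)"
      using c col[OF c] T by (simp add: lower_tableau_def tableaux_def)
  qed
qed

lemma content_lower_tableau:
  assumes "T \<in> tableaux (Suc N) la" "v < N"
  shows "content (lower_shape T) (lower_tableau T) v = content la T v"
proof -
  have "{c\<in>diagram (lower_shape T). lower_tableau T c = v} = {c\<in>diagram la. T c = v}"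
    using diagram_lower_shape[OF assms(1)] assms(2) by (auto simp: lower_tableau_def)
  then show ?thesis by (simp add: content_def)
qed

lemma extend_lower_tableau:
  assumes T: "T \<in> tableaux (Suc N) la"
  shows "extend_tableau la (lower_shape T) N (lower_tableau T) = T"
proof
  fix c
  have "T c = N" if "c \<in> diagram la" "c \<notin> diagram (lower_shape T)"
    using that T diagram_lower_shape[OF T] by (auto simp: tableaux_def less_Suc_eq)
  moreover have "T c = 0" if "c \<notin> diagram la" using T that by (rule tableaux_outside)
  ultimately show "extend_tableau la (lower_shape T) N (lower_tableau T) c = T c"
    by (auto simp: extend_tableau_def lower_tableau_def)
qed

lemma lower_extend_tableau:
  assumes ka: "ka \<in> inner_strips L la (a N)" and T: "T \<in> tableaux N ka" "\<forall>v<N. content ka T v = a v"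
  shows "lower_shape (extend_tableau la ka N T) = ka" and "lower_tableau (extend_tableau la ka N T) = T"
proof -
  let ?E = "extend_tableau la ka N T"
  have "diagram ka \<subseteq> diagram la"
    using ka by (intro diagram_mono) (simp add: inner_strips_def hstrip_def)
  moreover have "\<forall>c\<in>diagram ka. T c < N" using T by (simp add: tableaux_def)
  ultimately have "{c\<in>diagram la. ?E c < N} = diagram ka"
    by (auto simp: extend_tableau_def)
  then show shape: "lower_shape ?E = ka"
    using diagram_lower_shape extend_tableau_in_tableaux[OF _ T(1)] ka diagram_inj
    unfolding inner_strips_def by blast
  show "lower_tableau ?E = T"
  proof
    fix c show "lower_tableau ?E c = T c"
      using shape T by (cases "c \<in> diagram ka") (auto simp: lower_tableau_def extend_tableau_def tableaux_outside)
  qed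
qed

lemma kostka_branching:
  "kostka (Suc N) la a = (\<Sum>ka\<in>inner_strips L la (a N). kostka N ka a)"
proof -
  let ?X = "{T\<in>tableaux (Suc N) la. \<forall>v<Suc N. content la T v = a v}"
  let ?Y = "\<lambda>ka. {T\<in>tableaux N ka. \<forall>v<N. content ka T v = a v}"
  let ?D = "inner_strips L la (a N)"
  have la: "vanishes_from L la" using pla by (simp add: partition_fun_def)
  have extend_in: "extend_tableau la ka N T \<in> tableaux (Suc N) la" if "ka \<in> ?D" "T \<in> tableaux N ka" for ka T
    using that extend_tableau_in_tableaux by (simp add: inner_strips_def)
  have "bij_betw (\<lambda>p. extend_tableau la (fst p) N (snd p)) (Sigma ?D ?Y) ?X"
    by (rule bij_betw_byWitness[where f'="\<lambda>T. (lower_shape T, lower_tableau T)"])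
      (use extend_in content_extend_tableau lower_extend_tableau lower_shape_in_inner_strips lower_tableau_in_tableaux
         content_lower_tableau extend_lower_tableau in auto)
  then have "kostka (Suc N) la a = card (Sigma ?D ?Y)"
    by (simp add: kostka_def bij_betw_same_card)
  moreover have "finite (?Y ka)" if "ka \<in> ?D" for ka
  proof -
    have "vanishes_from L ka" using that la vanishes_from_le hstrip_le unfolding inner_strips_def by blast
    then show ?thesis using finite_tableaux by simp
  qed
  ultimately show ?thesis
    using finite_inner_strips[OF la] by (simp add: card_SigmaI kostka_def)
qed

end

section \<open>The Pieri rule for Kostka numbers\<close>

definition bounded_comps :: "nat \<Rightarrow> (nat \<Rightarrow> nat) \<Rightarrow> nat \<Rightarrow> (nat \<Rightarrow> nat) set" where
  "bounded_comps N a k = {g. (\<forall>i<N. g i \<le> a i) \<and> (\<forall>i\<ge>N. g i = 0) \<and> sum g {..<N} = k}"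

definition outer_strips :: "nat \<Rightarrow> (nat \<Rightarrow> nat) \<Rightarrow> nat \<Rightarrow> (nat \<Rightarrow> nat) set" where
  "outer_strips L mu k = {la. hstrip la mu \<and> psize L la = psize L mu + k}"

lemma finite_bounded_comps: "finite (bounded_comps N a k)"
proof (rule finite_subset[OF _ finite_bounded_funs[of k N]])
  show "bounded_comps N a k \<subseteq> {f. (\<forall>i. f i \<le> k) \<and> vanishes_from N f}"
  proof safe
    fix g i assume g: "g \<in> bounded_comps N a k"
    show "g i \<le> k"
    proof (cases "i < N")
      case True then show ?thesis using g member_le_sum[of i "{..<N}" g] by (auto simp: bounded_comps_def)
    next
      case False then show ?thesis using g by (auto simp: bounded_comps_def)
    qed
    show "vanishes_from N g" using g by (auto simp: bounded_comps_def vanishes_from_def)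
  qed
qed

lemma hstrip_vanishes_from_Suc: "hstrip la mu \<Longrightarrow> vanishes_from L mu \<Longrightarrow> vanishes_from (Suc L) la"
  unfolding hstrip_def vanishes_from_def by (metis Suc_le_D le_zero_eq not_less_eq_eq)

lemma finite_outer_strips:
  assumes "vanishes_from L mu" shows "finite (outer_strips (Suc L) mu k)"
proof (rule finite_subset[OF _ finite_bounded_funs[of "psize (Suc L) mu + k" "Suc L"]])
  show "outer_strips (Suc L) mu k \<subseteq> {f. (\<forall>i. f i \<le> psize (Suc L) mu + k) \<and> vanishes_from (Suc L) f}"
  proof safe
    fix la i assume la: "la \<in> outer_strips (Suc L) mu k"
    then have b: "vanishes_from (Suc L) la" using hstrip_vanishes_from_Suc assms by (auto simp: outer_strips_def)
    show "la i \<le> psize (Suc L) mu + k"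
    proof (cases "i < Suc L")
      case True then show ?thesis using le_psize[OF True, of la] la by (simp add: outer_strips_def)
    next
      case False then show ?thesis using b by (simp add: vanishes_from_def)
    qed
    show "vanishes_from (Suc L) la" by (rule b)
  qed
qed

lemma bounded_comps_Suc:
  "bij_betw (\<lambda>p. (snd p)(N := fst p)) (Sigma {x. x \<le> a N \<and> x \<le> k} (\<lambda>x. bounded_comps N a (k - x))) (bounded_comps (Suc N) a k)"
proof (rule bij_betw_byWitness[where f'="\<lambda>h. (h N, h(N := 0))"])
  show "\<forall>p\<in>Sigma {x. x \<le> a N \<and> x \<le> k} (\<lambda>x. bounded_comps N a (k - x)). (((snd p)(N := fst p)) N, ((snd p)(N := fst p))(N := 0)) = p"
    by (auto simp: bounded_comps_def fun_eq_iff)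
  show "\<forall>h\<in>bounded_comps (Suc N) a k. (snd (h N, h(N := 0)))(N := fst (h N, h(N := 0))) = h"
    by auto
  show "(\<lambda>p. (snd p)(N := fst p)) ` Sigma {x. x \<le> a N \<and> x \<le> k} (\<lambda>x. bounded_comps N a (k - x)) \<subseteq> bounded_comps (Suc N) a k"
  proof safe
    fix x g assume x: "x \<le> a N" "x \<le> k" and g: "g \<in> bounded_comps N a (k - x)"
    have s: "sum (g(N := x)) {..<N} = sum g {..<N}" by (rule sum.cong) auto
    show "(snd (x, g))(N := fst (x, g)) \<in> bounded_comps (Suc N) a k"
      using x g s by (auto simp: bounded_comps_def less_Suc_eq)
  qed
  show "(\<lambda>h. (h N, h(N := 0))) ` bounded_comps (Suc N) a k \<subseteq> Sigma {x. x \<le> a N \<and> x \<le> k} (\<lambda>x. bounded_comps N a (k - x))"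
  proof safe
    fix h assume h: "h \<in> bounded_comps (Suc N) a k"
    have s: "sum (h(N := 0)) {..<N} = sum h {..<N}" by (rule sum.cong) auto
    have t: "sum h {..<Suc N} = k" using h by (simp add: bounded_comps_def)
    show "h N \<le> a N" using h by (simp add: bounded_comps_def)
    show "h N \<le> k" using t by simp
    show "h(N := 0) \<in> bounded_comps N a (k - h N)" using h s t by (auto simp: bounded_comps_def)
  qed
qed

lemma sum_sum_regroup:
  assumes "finite A" "\<forall>x\<in>A. B x \<subseteq> R" "finite R"
  shows "(\<Sum>x\<in>A. \<Sum>y\<in>B x. f y) = (\<Sum>r\<in>R. of_nat (card {x\<in>A. r \<in> B x}) * (f r :: 'a :: comm_semiring_1))"
proof -
  have "(\<Sum>x\<in>A. \<Sum>y\<in>B x. f y) = (\<Sum>x\<in>A. \<Sum>r\<in>R. if r \<in> B x then f r else 0)"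
  proof (rule sum.cong)
    fix x assume x: "x \<in> A"
    have "B x = {r\<in>R. r \<in> B x}" using assms(2) x by auto
    then have "(\<Sum>y\<in>B x. f y) = (\<Sum>y\<in>{r\<in>R. r \<in> B x}. f y)" by simp
    also have "\<dots> = (\<Sum>r\<in>R. if r \<in> B x then f r else 0)" using sum.inter_filter[OF assms(3)] by simp
    finally show "(\<Sum>y\<in>B x. f y) = (\<Sum>r\<in>R. if r \<in> B x then f r else 0)" .
  qed simp
  also have "\<dots> = (\<Sum>r\<in>R. \<Sum>x\<in>A. if r \<in> B x then f r else 0)" by (rule sum.swap)
  also have "\<dots> = (\<Sum>r\<in>R. of_nat (card {x\<in>A. r \<in> B x}) * f r)"
  proof (rule sum.cong)
    fix r
    have "(\<Sum>x\<in>A. if r \<in> B x then f r else 0) = (\<Sum>x\<in>{x\<in>A. r \<in> B x}. f r)"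
      using sum.inter_filter[OF assms(1), of "\<lambda>_. f r" "\<lambda>x. r \<in> B x"] by simp
    also have "\<dots> = of_nat (card {x\<in>A. r \<in> B x}) * f r" by simp
    finally show "(\<Sum>x\<in>A. if r \<in> B x then f r else 0) = of_nat (card {x\<in>A. r \<in> B x}) * f r" .
  qed simp
  finally show ?thesis .
qed

lemma hstrip_shift: "hstrip la A \<Longrightarrow> hstrip A (\<lambda>i. la (Suc i))"
  by (simp add: hstrip_def)

lemma hstrip_case_nat: "hstrip A t \<Longrightarrow> A 0 \<le> x \<Longrightarrow> hstrip (case_nat x t) A"
  by (auto simp: hstrip_def split: nat.split)

context
  fixes L :: nat and mu rho :: "nat \<Rightarrow> nat" and e k :: nat
  assumes bmu: "vanishes_from L mu" and brho: "vanishes_from (Suc L) rho"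
begin

lemma mu_vanishes_from_Suc: "vanishes_from (Suc L) mu" using bmu by (simp add: vanishes_from_def)

lemma card_inner_then_outer:
  "card {p \<in> Sigma {x. x \<le> e \<and> x \<le> k} (\<lambda>x. inner_strips (Suc L) mu (e - x)). rho \<in> outer_strips (Suc L) (snd p) (k - fst p)}
   = card {ka\<in>strip_box mu rho. psize (Suc L) mu \<le> psize (Suc L) ka + e \<and> psize (Suc L) rho + e = psize (Suc L) mu + k}"
proof (rule bij_betw_same_card[where f=snd], rule bij_betw_byWitness[where f'="\<lambda>ka. (psize (Suc L) ka + e - psize (Suc L) mu, ka)"])
  let ?S = "Suc L"
  let ?A = "{p \<in> Sigma {x. x \<le> e \<and> x \<le> k} (\<lambda>x. inner_strips ?S mu (e - x)). rho \<in> outer_strips ?S (snd p) (k - fst p)}"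
  let ?B = "{ka\<in>strip_box mu rho. psize ?S mu \<le> psize ?S ka + e \<and> psize ?S rho + e = psize ?S mu + k}"
  have A_iff: "p \<in> ?A \<longleftrightarrow> snd p \<in> ?B \<and> fst p = psize ?S (snd p) + e - psize ?S mu" for p
  proof -
    obtain x ka where p: "p = (x, ka)" by (cases p)
    show ?thesis
    proof
      assume "p \<in> ?A"
      then have x: "x \<le> e" "x \<le> k" and h1: "hstrip mu ka" and s1: "psize ?S ka + (e - x) = psize ?S mu"
        and h2: "hstrip rho ka" and s2: "psize ?S rho = psize ?S ka + (k - x)"
        using p by (auto simp: inner_strips_def outer_strips_def)
      have "snd p \<in> ?B" using p h1 h2 s1 s2 x by (auto simp: strip_box_def)
      moreover have "fst p = psize ?S (snd p) + e - psize ?S mu" using p s1 x by simp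
      ultimately show "snd p \<in> ?B \<and> fst p = psize ?S (snd p) + e - psize ?S mu" by simp
    next
      assume a: "snd p \<in> ?B \<and> fst p = psize ?S (snd p) + e - psize ?S mu"
      then have kb: "ka \<in> strip_box mu rho" and c1: "psize ?S mu \<le> psize ?S ka + e" and c2: "psize ?S rho + e = psize ?S mu + k"
        and xe: "x = psize ?S ka + e - psize ?S mu" using p by auto
      have le1: "psize ?S ka \<le> psize ?S mu" "psize ?S ka \<le> psize ?S rho" using psize_strip_box_le_sides[OF kb] by auto
      have "x \<le> e" "x \<le> k" using xe le1 c1 c2 by linarith+
      moreover have "psize ?S ka + (e - x) = psize ?S mu" using xe le1 c1 by linarith
      moreover have "psize ?S rho = psize ?S ka + (k - x)" using xe le1 c1 c2 by linarith
      ultimately show "p \<in> ?A" using p kb by (auto simp: inner_strips_def outer_strips_def strip_box_def)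
    qed
  qed
  show "\<forall>p\<in>?A. (psize ?S (snd p) + e - psize ?S mu, snd p) = p" using A_iff by auto
  show "\<forall>ka\<in>?B. snd (psize ?S ka + e - psize ?S mu, ka) = ka" by simp
  show "snd ` ?A \<subseteq> ?B" using A_iff by blast
  show "(\<lambda>ka. (psize ?S ka + e - psize ?S mu, ka)) ` ?B \<subseteq> ?A" using A_iff by auto
qed

text \<open>A partition la containing mu and rho as inner strips is determined by its parts from the
  second on, which form an element of the box of mu and rho; the first part is fixed by the size.\<close>

definition add_first_row :: "(nat \<Rightarrow> nat) \<Rightarrow> nat \<Rightarrow> nat" where
  "add_first_row t = case_nat (psize (Suc L) mu + k - psize (Suc L) t) t"

lemma psize_shift: "la (Suc L) = 0 \<Longrightarrow> psize (Suc L) la = la 0 + psize (Suc L) (\<lambda>i. la (Suc i))"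
  unfolding psize_def by (subst sum.lessThan_Suc_shift) simp

lemma card_outer_then_inner:
  "card {la \<in> outer_strips (Suc L) mu k. rho \<in> inner_strips (Suc L) la e}
   = card {t\<in>strip_box mu rho. max (mu 0) (rho 0) + psize (Suc L) t \<le> psize (Suc L) mu + k \<and> psize (Suc L) rho + e = psize (Suc L) mu + k}"
proof (rule bij_betw_same_card[where f="\<lambda>la i. la (Suc i)"], rule bij_betw_byWitness[where f'=add_first_row])
  let ?S = "Suc L"
  let ?A = "{la \<in> outer_strips ?S mu k. rho \<in> inner_strips ?S la e}"
  let ?B = "{t\<in>strip_box mu rho. max (mu 0) (rho 0) + psize ?S t \<le> psize ?S mu + k \<and> psize ?S rho + e = psize ?S mu + k}"
  have psize_la: "psize ?S la = la 0 + psize ?S (\<lambda>i. la (Suc i))" if "hstrip la mu" for la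
    using that bmu by (intro psize_shift) (metis hstrip_def le_zero_eq vanishes_from_def order_refl)
  show "\<forall>la\<in>?A. add_first_row (\<lambda>i. la (Suc i)) = la"
    using psize_la by (auto simp: outer_strips_def add_first_row_def fun_eq_iff split: nat.split)
  show "\<forall>t\<in>?B. (\<lambda>i. add_first_row t (Suc i)) = t" by (simp add: add_first_row_def)
  show "(\<lambda>la i. la (Suc i)) ` ?A \<subseteq> ?B"
  proof safe
    fix la assume "la \<in> outer_strips ?S mu k" "rho \<in> inner_strips ?S la e"
    then have h: "hstrip la mu" and s: "psize ?S la = psize ?S mu + k" and h2: "hstrip la rho"
      and s2: "psize ?S rho + e = psize ?S la" by (auto simp: outer_strips_def inner_strips_def)
    show "(\<lambda>i. la (Suc i)) \<in> strip_box mu rho" using h h2 by (simp add: strip_box_def hstrip_shift)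
    have "mu 0 \<le> la 0" "rho 0 \<le> la 0" using h h2 by (auto simp: hstrip_def)
    then show "max (mu 0) (rho 0) + psize ?S (\<lambda>i. la (Suc i)) \<le> psize ?S mu + k" using s psize_la[OF h] by simp
    show "psize ?S rho + e = psize ?S mu + k" using s s2 by simp
  qed
  show "add_first_row ` ?B \<subseteq> ?A"
  proof safe
    fix t assume t: "t \<in> strip_box mu rho" and c1: "max (mu 0) (rho 0) + psize ?S t \<le> psize ?S mu + k"
      and c2: "psize ?S rho + e = psize ?S mu + k"
    let ?la = "add_first_row t"
    have "mu 0 \<le> ?la 0" "rho 0 \<le> ?la 0" using c1 by (auto simp: add_first_row_def)
    then have h: "hstrip ?la mu" and h2: "hstrip ?la rho"
      using t hstrip_case_nat by (auto simp: strip_box_def add_first_row_def)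
    have "psize ?S ?la = psize ?S mu + k"
      using psize_la[OF h] c1 by (simp add: add_first_row_def)
    then show "?la \<in> outer_strips ?S mu k" "rho \<in> inner_strips ?S ?la e"
      using h h2 c2 by (simp_all add: outer_strips_def inner_strips_def)
  qed
qed

text \<open>By the two bijections above both sides count elements of the box of mu and rho, subject to
  the size conditions |t| \<ge> |mu| - e and |t| \<le> |mu| + k - max mu_1 rho_1 respectively;
  the box reflection exchanges these conditions.\<close>

lemma card_strip_paths_commute:
  "card {p \<in> Sigma {x. x \<le> e \<and> x \<le> k} (\<lambda>x. inner_strips (Suc L) mu (e - x)). rho \<in> outer_strips (Suc L) (snd p) (k - fst p)}
   = card {la \<in> outer_strips (Suc L) mu k. rho \<in> inner_strips (Suc L) la e}"
proof -
  let ?S = "Suc L"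
  let ?M = "max (mu 0) (rho 0)"
  let ?T = "psize ?S mu + psize ?S rho - ?M"
  let ?Q = "psize ?S rho + e = psize ?S mu + k"
  have "card {t\<in>strip_box mu rho. ?M + psize ?S t \<le> psize ?S mu + k \<and> ?Q}
      = card {t\<in>strip_box mu rho. ?M + (?T - psize ?S t) \<le> psize ?S mu + k \<and> ?Q}"
    using card_strip_box_reflect[OF mu_vanishes_from_Suc brho, of "\<lambda>s. ?M + s \<le> psize ?S mu + k \<and> ?Q"] by simp
  also have "\<dots> = card {ka\<in>strip_box mu rho. psize ?S mu \<le> psize ?S ka + e \<and> ?Q}"
  proof (rule arg_cong[where f=card], rule Collect_cong, rule conj_cong[OF refl])
    fix t assume t: "t \<in> strip_box mu rho"
    have le: "psize ?S t \<le> ?T" using psize_strip_box_le[OF t mu_vanishes_from_Suc brho] .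
    have m1: "mu 0 \<le> psize ?S mu" "rho 0 \<le> psize ?S rho" using le_psize[of 0 "Suc L"] by auto
    show "(?M + (?T - psize ?S t) \<le> psize ?S mu + k \<and> ?Q) = (psize ?S mu \<le> psize ?S t + e \<and> ?Q)"
      using le m1 by (cases "mu 0 \<le> rho 0") (auto simp: max_def)
  qed
  finally show ?thesis using card_inner_then_outer card_outer_then_inner by simp
qed

end

lemma outer_strips_partition_fun: "la \<in> outer_strips (Suc L) mu k \<Longrightarrow> vanishes_from L mu \<Longrightarrow> partition_fun (Suc L) la"
  unfolding partition_fun_def outer_strips_def using hstrip_vanishes_from_Suc by (auto simp: hstrip_def) (meson le_trans)

lemma bounded_comps_0: "bounded_comps 0 a k = (if k = 0 then {\<lambda>_. 0} else {})"
  by (auto simp: bounded_comps_def fun_eq_iff)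

lemma sum_strip_paths_commute:
  fixes f :: "(nat \<Rightarrow> nat) \<Rightarrow> 'a::comm_semiring_1"
  assumes mu: "vanishes_from L mu"
  shows "(\<Sum>p\<in>Sigma {x. x \<le> e \<and> x \<le> k} (\<lambda>x. inner_strips (Suc L) mu (e - x)).
            \<Sum>rho\<in>outer_strips (Suc L) (snd p) (k - fst p). f rho)
       = (\<Sum>la\<in>outer_strips (Suc L) mu k. \<Sum>rho\<in>inner_strips (Suc L) la e. f rho)"
proof -
  let ?S = "Suc L"
  let ?P = "Sigma {x. x \<le> e \<and> x \<le> k} (\<lambda>x. inner_strips ?S mu (e - x))"
  let ?R = "{rho. (\<forall>i. rho i \<le> psize ?S mu + k) \<and> vanishes_from ?S rho}"
  have in_R: "rho \<in> ?R" if "vanishes_from ?S rho" "psize ?S rho \<le> psize ?S mu + k" for rho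
  proof -
    have "rho i \<le> psize ?S mu + k" for i
      using that le_psize[of i ?S rho] by (cases "i < ?S") (auto simp: vanishes_from_def)
    then show ?thesis using that(1) by simp
  qed
  have mu': "vanishes_from ?S mu" using mu by (simp add: vanishes_from_def)
  have "(\<Sum>p\<in>?P. \<Sum>rho\<in>outer_strips ?S (snd p) (k - fst p). f rho)
      = (\<Sum>rho\<in>?R. of_nat (card {p\<in>?P. rho \<in> outer_strips ?S (snd p) (k - fst p)}) * f rho)"
  proof (rule sum_sum_regroup[OF _ _ finite_bounded_funs])
    show "finite ?P" using finite_inner_strips[OF mu'] by auto
    show "\<forall>p\<in>?P. outer_strips ?S (snd p) (k - fst p) \<subseteq> ?R"
    proof (intro ballI subsetI in_R)
      fix p rho assume p: "p \<in> ?P" and rho: "rho \<in> outer_strips ?S (snd p) (k - fst p)"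
      have strip: "hstrip mu (snd p)" using p by (auto simp: inner_strips_def)
      then have "vanishes_from L (snd p)" using mu vanishes_from_le hstrip_le by metis
      then show "vanishes_from ?S rho" using rho hstrip_vanishes_from_Suc by (auto simp: outer_strips_def)
      have "psize ?S (snd p) \<le> psize ?S mu" unfolding psize_def by (rule sum_mono) (simp add: hstrip_le[OF strip])
      then show "psize ?S rho \<le> psize ?S mu + k" using rho by (simp add: outer_strips_def)
    qed
  qed
  also have "\<dots> = (\<Sum>rho\<in>?R. of_nat (card {la\<in>outer_strips ?S mu k. rho \<in> inner_strips ?S la e}) * f rho)"
  proof (rule sum.cong[OF refl])
    fix rho assume "rho \<in> ?R"
    then have "vanishes_from ?S rho" by simp
    then show "of_nat (card {p\<in>?P. rho \<in> outer_strips ?S (snd p) (k - fst p)}) * f rho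
        = of_nat (card {la\<in>outer_strips ?S mu k. rho \<in> inner_strips ?S la e}) * f rho"
      by (simp only: card_strip_paths_commute[OF mu])
  qed
  also have "\<dots> = (\<Sum>la\<in>outer_strips ?S mu k. \<Sum>rho\<in>inner_strips ?S la e. f rho)"
  proof (rule sum_sum_regroup[OF finite_outer_strips[OF mu] _ finite_bounded_funs, symmetric])
    show "\<forall>la\<in>outer_strips ?S mu k. inner_strips ?S la e \<subseteq> ?R"
    proof (intro ballI subsetI in_R)
      fix la rho assume la: "la \<in> outer_strips ?S mu k" and rho: "rho \<in> inner_strips ?S la e"
      have "vanishes_from ?S la" using la mu hstrip_vanishes_from_Suc by (auto simp: outer_strips_def)
      moreover have "hstrip la rho" using rho by (simp add: inner_strips_def)
      ultimately show "vanishes_from ?S rho" using vanishes_from_le hstrip_le by blast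
      show "psize ?S rho \<le> psize ?S mu + k" using la rho by (simp add: outer_strips_def inner_strips_def)
    qed
  qed
  finally show ?thesis .
qed

lemma kostka_pieri:
  "partition_fun L mu \<Longrightarrow> (\<Sum>g\<in>bounded_comps N a k. kostka N mu (\<lambda>i. a i - g i)) = (\<Sum>la\<in>outer_strips (Suc L) mu k. kostka N la a)"
proof (induction N arbitrary: mu a k)
  case 0
  have mu: "vanishes_from L mu" using 0 by (simp add: partition_fun_def)
  have "(\<Sum>la\<in>outer_strips (Suc L) mu k. kostka 0 la a) = (\<Sum>la\<in>outer_strips (Suc L) mu k. if la = (\<lambda>_. 0) then 1 else 0)"
    by (rule sum.cong) (auto simp: kostka_0 fun_eq_iff)
  also have "\<dots> = (if (\<lambda>_. 0) \<in> outer_strips (Suc L) mu k then 1 else 0)"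
    by (rule sum.delta[OF finite_outer_strips[OF mu]])
  also have "\<dots> = (if k = 0 \<and> (\<forall>i. mu i = 0) then 1 else 0)"
    by (auto simp: outer_strips_def hstrip_def psize_def)
  finally show ?case by (simp add: bounded_comps_0 kostka_0)
next
  case (Suc N)
  let ?S = "Suc L" and ?X = "{x. x \<le> a N \<and> x \<le> k}"
  have mu: "vanishes_from L mu" and mu': "partition_fun ?S mu"
    using Suc.prems by (auto simp: partition_fun_def vanishes_from_def)
  have "(\<Sum>g\<in>bounded_comps (Suc N) a k. kostka (Suc N) mu (\<lambda>i. a i - g i))
      = (\<Sum>p\<in>Sigma ?X (\<lambda>x. bounded_comps N a (k - x)). kostka (Suc N) mu (\<lambda>i. a i - ((snd p)(N := fst p)) i))"
    using sum.reindex_bij_betw[OF bounded_comps_Suc, of "\<lambda>g. kostka (Suc N) mu (\<lambda>i. a i - g i)"] by simp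
  also have "\<dots> = (\<Sum>x\<in>?X. \<Sum>g\<in>bounded_comps N a (k - x). kostka (Suc N) mu (\<lambda>i. a i - (g(N := x)) i))"
    by (subst sum.Sigma) (auto simp: finite_bounded_comps case_prod_beta)
  also have "\<dots> = (\<Sum>x\<in>?X. \<Sum>g\<in>bounded_comps N a (k - x). \<Sum>ka\<in>inner_strips ?S mu (a N - x). kostka N ka (\<lambda>i. a i - g i))"
  proof (intro sum.cong refl)
    fix x g
    have "kostka (Suc N) mu (\<lambda>i. a i - (g(N := x)) i)
        = (\<Sum>ka\<in>inner_strips ?S mu (a N - x). kostka N ka (\<lambda>i. a i - (g(N := x)) i))"
      using kostka_branching[OF mu'] by simp
    also have "\<dots> = (\<Sum>ka\<in>inner_strips ?S mu (a N - x). kostka N ka (\<lambda>i. a i - g i))"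
      by (intro sum.cong refl kostka_cong) auto
    finally show "kostka (Suc N) mu (\<lambda>i. a i - (g(N := x)) i)
        = (\<Sum>ka\<in>inner_strips ?S mu (a N - x). kostka N ka (\<lambda>i. a i - g i))" .
  qed
  also have "\<dots> = (\<Sum>x\<in>?X. \<Sum>ka\<in>inner_strips ?S mu (a N - x). \<Sum>g\<in>bounded_comps N a (k - x). kostka N ka (\<lambda>i. a i - g i))"
    by (intro sum.cong refl sum.swap)
  also have "\<dots> = (\<Sum>x\<in>?X. \<Sum>ka\<in>inner_strips ?S mu (a N - x). \<Sum>rho\<in>outer_strips ?S ka (k - x). kostka N rho a)"
  proof (rule sum.cong[OF refl], rule sum.cong[OF refl])
    fix x ka assume "ka \<in> inner_strips ?S mu (a N - x)"
    then have "partition_fun L ka" using mu hstrip_partition_fun by (auto simp: inner_strips_def)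
    then show "(\<Sum>g\<in>bounded_comps N a (k - x). kostka N ka (\<lambda>i. a i - g i))
        = (\<Sum>rho\<in>outer_strips ?S ka (k - x). kostka N rho a)"
      by (rule Suc.IH)
  qed
  also have "\<dots> = (\<Sum>p\<in>Sigma ?X (\<lambda>x. inner_strips ?S mu (a N - x)).
      \<Sum>rho\<in>outer_strips ?S (snd p) (k - fst p). kostka N rho a)"
    using finite_inner_strips[of ?S mu] mu' by (subst sum.Sigma) (auto simp: case_prod_beta partition_fun_def)
  also have "\<dots> = (\<Sum>la\<in>outer_strips ?S mu k. \<Sum>rho\<in>inner_strips ?S la (a N). kostka N rho a)"
    by (rule sum_strip_paths_commute[OF mu])
  also have "\<dots> = (\<Sum>la\<in>outer_strips ?S mu k. kostka (Suc N) la a)"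
    using kostka_branching[OF outer_strips_partition_fun[OF _ mu]] by (intro sum.cong refl) simp
  finally show ?case .
qed

section \<open>Schur polynomials and the Pieri rule\<close>

definition pad :: "nat list \<Rightarrow> nat \<Rightarrow> nat" where
  "pad la i = (if i < length la then la ! i else 0)"

lemma cells_eq_diagram_pad: "cells la = diagram (pad la)"
  by (auto simp: cells_def diagram_def pad_def split: if_splits)

lemma ssyt_eq_tableaux_pad: "ssyt N la = tableaux N (pad la)"
  by (simp add: ssyt_def tableaux_def cells_eq_diagram_pad)

lemma vanishes_from_pad: "length la \<le> L \<Longrightarrow> vanishes_from L (pad la)"
  by (simp add: vanishes_from_def pad_def)

lemma partition_fun_pad: "is_partition la \<Longrightarrow> length la \<le> L \<Longrightarrow> partition_fun L (pad la)"
  unfolding partition_fun_def is_partition_def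
  by (auto simp: vanishes_from_pad pad_def sorted_wrt_iff_nth_less)

lemma pad_pos: "is_partition la \<Longrightarrow> i < length la \<Longrightarrow> 0 < pad la i"
  by (simp add: is_partition_def pad_def)

lemma sum_list_pad: "length la \<le> L \<Longrightarrow> sum_list la = psize L (pad la)"
proof -
  assume l: "length la \<le> L"
  have "sum_list la = (\<Sum>i<length la. la ! i)" by (simp add: sum_list_sum_nth atLeast0LessThan)
  also have "\<dots> = (\<Sum>i<length la. pad la i)" by (rule sum.cong) (auto simp: pad_def)
  also have "\<dots> = (\<Sum>i<L. pad la i)" using l by (intro sum.mono_neutral_left) (auto simp: pad_def)
  finally show ?thesis by (simp add: psize_def)
qed

lemma pad_inj:
  assumes "is_partition la" "is_partition mu" "pad la = pad mu"
  shows "la = mu"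
proof -
  have "length la = length mu"
  proof (rule ccontr)
    assume "length la \<noteq> length mu"
    then consider "length la < length mu" | "length mu < length la" by linarith
    then show False
    proof cases
      case 1 then show False using pad_pos[OF assms(2) 1] fun_cong[OF assms(3), of "length la"] by (simp add: pad_def)
    next
      case 2 then show False using pad_pos[OF assms(1) 2] fun_cong[OF assms(3), of "length mu"] by (simp add: pad_def)
    qed
  qed
  moreover have "\<forall>i<length la. la ! i = mu ! i" using assms(3) calculation
    by (metis pad_def)
  ultimately show ?thesis by (simp add: nth_equalityI)
qed

lemma pad_surj:
  assumes "partition_fun L f"
  shows "\<exists>la. is_partition la \<and> length la \<le> L \<and> pad la = f"
proof -
  have fL: "f L = 0" using assms by (simp add: partition_fun_def vanishes_from_def)
  define l where "l = (LEAST i. f i = 0)"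
  have fl: "f l = 0" unfolding l_def by (rule LeastI[of _ L]) (rule fL)
  have lL: "l \<le> L" unfolding l_def by (rule Least_le) (rule fL)
  have pos: "i < l \<Longrightarrow> 0 < f i" for i unfolding l_def using not_less_Least by blast
  have antitone: "f j \<le> f i" if "i \<le> j" for i j
    using assms that lift_Suc_antimono_le[of f] by (simp add: partition_fun_def)
  let ?la = "map f [0..<l]"
  have "is_partition ?la"
    unfolding is_partition_def by (auto simp: sorted_wrt_iff_nth_less pos antitone)
  moreover have "pad ?la = f"
  proof
    fix i show "pad ?la i = f i"
    proof (cases "i < l")
      case True then show ?thesis by (simp add: pad_def)
    next
      case False then show ?thesis using antitone[of l i] fl by (simp add: pad_def)
    qed
  qed
  ultimately show ?thesis using lL by auto
qed

lemma length_le_sum_list: "is_partition la \<Longrightarrow> length la \<le> sum_list la"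
proof -
  assume p: "is_partition la"
  have "\<forall>x\<in>set la. 1 \<le> x" using p by (auto simp: is_partition_def)
  then have "sum_list (map (\<lambda>_. 1::nat) la) \<le> sum_list la"
    by (metis (no_types, lifting) map_ident sum_list_mono)
  then show ?thesis by (simp add: sum_list_triv)
qed

lemma finite_cells: "finite (cells la)"
  using finite_diagram[OF vanishes_from_pad[of la "length la"]] by (simp add: cells_eq_diagram_pad)

lemma finite_ssyt: "finite (ssyt N la)"
  using finite_tableaux[OF vanishes_from_pad[of la "length la"]] by (simp add: ssyt_eq_tableaux_pad)

lemma sum_when_card: "finite C \<Longrightarrow> (\<Sum>c\<in>C. (1::'a::comm_semiring_1) when P c) = of_nat (card {c\<in>C. P c})"
proof -
  assume fin: "finite C"
  have "(\<Sum>c\<in>C. (1::'a) when P c) = (\<Sum>c\<in>C. if P c then 1 else 0)" by (simp add: when_def)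
  also have "\<dots> = (\<Sum>c\<in>{c\<in>C. P c}. 1)" using sum.inter_filter[OF fin, of "\<lambda>_. 1::'a" P] by simp
  also have "\<dots> = of_nat (card {c\<in>C. P c})" by simp
  finally show ?thesis .
qed

lemma lookup_tab_monomial: "Poly_Mapping.lookup (tab_monomial la T) i = content (pad la) T i"
proof -
  have "Poly_Mapping.lookup (tab_monomial la T) i = (\<Sum>c\<in>cells la. (1::nat) when T c = i)"
    by (simp add: tab_monomial_def lookup_sum lookup_single)
  also have "\<dots> = card {c\<in>cells la. T c = i}"
    using sum_when_card[where C="cells la" and P="\<lambda>c. T c = i" and 'a = nat] finite_cells by simp
  finally show ?thesis by (simp add: content_def cells_eq_diagram_pad)
qed

lemma content_ge: "T \<in> tableaux N f \<Longrightarrow> N \<le> i \<Longrightarrow> content f T i = 0"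
proof -
  assume T: "T \<in> tableaux N f" and i: "N \<le> i"
  have "\<forall>c\<in>diagram f. T c < N" using T by (simp add: tableaux_def)
  then have "{c\<in>diagram f. T c = i} = {}" using i by auto
  then show ?thesis unfolding content_def by (metis card.empty)
qed

definition exponents :: "nat \<Rightarrow> nat \<Rightarrow> (nat \<Rightarrow>\<^sub>0 nat) set" where
  "exponents N k = {a :: nat \<Rightarrow>\<^sub>0 nat. Poly_Mapping.keys a \<subseteq> {..<N} \<and> (\<Sum>i\<in>Poly_Mapping.keys a. Poly_Mapping.lookup a i) = k}"

lemma exponents_iff: "a \<in> exponents N k \<longleftrightarrow> vanishes_from N (Poly_Mapping.lookup a) \<and> sum (Poly_Mapping.lookup a) {..<N} = k"
proof -
  have "Poly_Mapping.keys a \<subseteq> {..<N} \<longleftrightarrow> vanishes_from N (Poly_Mapping.lookup a)"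
  proof
    assume "Poly_Mapping.keys a \<subseteq> {..<N}"
    then show "vanishes_from N (Poly_Mapping.lookup a)" unfolding vanishes_from_def
      by (metis in_keys_iff lessThan_iff not_le subsetD)
  next
    assume "vanishes_from N (Poly_Mapping.lookup a)"
    then show "Poly_Mapping.keys a \<subseteq> {..<N}" unfolding vanishes_from_def
      by (metis in_keys_iff lessThan_iff not_le subsetI)
  qed
  moreover have "Poly_Mapping.keys a \<subseteq> {..<N} \<Longrightarrow>
      (\<Sum>i\<in>Poly_Mapping.keys a. Poly_Mapping.lookup a i) = sum (Poly_Mapping.lookup a) {..<N}"
    by (rule sum.mono_neutral_left) (auto simp: in_keys_iff)
  ultimately show ?thesis by (auto simp: exponents_def)
qed

lemma finite_exponents: "finite (exponents N k)"
proof -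
  have "Poly_Mapping.lookup ` exponents N k \<subseteq> {f. (\<forall>i. f i \<le> k) \<and> vanishes_from N f}"
  proof safe
    fix a i assume a: "a \<in> exponents N k"
    then have b: "vanishes_from N (Poly_Mapping.lookup a)" and s: "sum (Poly_Mapping.lookup a) {..<N} = k"
      by (auto simp: exponents_iff)
    show "Poly_Mapping.lookup a i \<le> k"
    proof (cases "i < N")
      case True then show ?thesis using member_le_sum[of i "{..<N}" "Poly_Mapping.lookup a"] s by simp
    next
      case False then show ?thesis using b by (simp add: vanishes_from_def)
    qed
    show "vanishes_from N (Poly_Mapping.lookup a)" by (rule b)
  qed
  moreover have "inj_on Poly_Mapping.lookup (exponents N k)"
    by (rule inj_onI) (simp add: poly_mapping_eqI)
  ultimately show ?thesis
    using finite_subset[OF _ finite_bounded_funs] finite_imageD by blast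
qed

lemma hcomp_eq_sum_exponents: "hcomp N k = (\<Sum>a\<in>exponents N k. Poly_Mapping.single a 1)"
  by (simp add: hcomp_def exponents_def)

lemma lookup_schur_card:
  "Poly_Mapping.lookup (schur N la) \<alpha> = int (card {T\<in>ssyt N la. tab_monomial la T = \<alpha>})"
proof -
  have "Poly_Mapping.lookup (schur N la) \<alpha> = (\<Sum>T\<in>ssyt N la. (1::int) when tab_monomial la T = \<alpha>)"
    by (auto simp: schur_def lookup_sum lookup_single when_def intro!: sum.cong)
  also have "\<dots> = int (card {T\<in>ssyt N la. tab_monomial la T = \<alpha>})"
    by (rule sum_when_card[OF finite_ssyt])
  finally show ?thesis .
qed

lemma tab_monomial_add_eq_iff: "tab_monomial la T + \<gamma> = \<alpha> \<longleftrightarrow>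
    (\<forall>i. content (pad la) T i + Poly_Mapping.lookup \<gamma> i = Poly_Mapping.lookup \<alpha> i)"
  by (metis lookup_add lookup_tab_monomial poly_mapping_eqI)

lemma card_tab_monomial_add:
  assumes \<gamma>: "vanishes_from N (Poly_Mapping.lookup \<gamma>)"
  shows "card {T\<in>ssyt N mu. tab_monomial mu T + \<gamma> = \<alpha>} =
    (if vanishes_from N (Poly_Mapping.lookup \<alpha>) \<and> (\<forall>i. Poly_Mapping.lookup \<gamma> i \<le> Poly_Mapping.lookup \<alpha> i)
     then kostka N (pad mu) (\<lambda>i. Poly_Mapping.lookup \<alpha> i - Poly_Mapping.lookup \<gamma> i) else 0)"
proof -
  let ?a = "Poly_Mapping.lookup \<alpha>" and ?g = "Poly_Mapping.lookup \<gamma>"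
  let ?T = "{T\<in>tableaux N (pad mu). \<forall>i. content (pad mu) T i + ?g i = ?a i}"
  have eq: "{T\<in>ssyt N mu. tab_monomial mu T + \<gamma> = \<alpha>} = ?T"
    by (simp add: ssyt_eq_tableaux_pad tab_monomial_add_eq_iff)
  show ?thesis
  proof (cases "vanishes_from N ?a \<and> (\<forall>i. ?g i \<le> ?a i)")
    case bounded: True
    have "(\<forall>i. content (pad mu) T i + ?g i = ?a i) \<longleftrightarrow> (\<forall>v<N. content (pad mu) T v = ?a v - ?g v)"
      if T: "T \<in> tableaux N (pad mu)" for T
    proof
      assume low: "\<forall>v<N. content (pad mu) T v = ?a v - ?g v"
      show "\<forall>i. content (pad mu) T i + ?g i = ?a i"
      proof
        fix i show "content (pad mu) T i + ?g i = ?a i"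
        proof (cases "i < N")
          case True then show ?thesis using low bounded by simp
        next
          case False then show ?thesis
            using content_ge[OF T] bounded \<gamma> by (simp add: vanishes_from_def)
        qed
      qed
    qed (metis add_diff_cancel_right')
    then have "?T = {T\<in>tableaux N (pad mu). \<forall>v<N. content (pad mu) T v = ?a v - ?g v}" by blast
    then show ?thesis using bounded by (simp add: eq kostka_def)
  next
    case False
    have "?T = {}"
    proof (rule equals0I)
      fix T assume "T \<in> ?T"
      then have T: "T \<in> tableaux N (pad mu)" and sum_eq: "\<And>i. content (pad mu) T i + ?g i = ?a i" by auto
      from False obtain i where "\<not> ?g i \<le> ?a i \<or> (N \<le> i \<and> ?a i \<noteq> 0)"
        by (auto simp: vanishes_from_def)
      then show False
        using sum_eq[of i] content_ge[OF T, of i] \<gamma> by (auto simp: vanishes_from_def)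
    qed
    then show ?thesis by (simp only: eq card.empty if_not_P[OF False])
  qed
qed

lemma lookup_schur:
  "Poly_Mapping.lookup (schur N la) \<alpha> =
     (if vanishes_from N (Poly_Mapping.lookup \<alpha>) then int (kostka N (pad la) (Poly_Mapping.lookup \<alpha>)) else 0)"
proof -
  have "vanishes_from N (Poly_Mapping.lookup 0)" by (simp add: vanishes_from_def)
  from card_tab_monomial_add[OF this, of la \<alpha>] show ?thesis by (simp add: lookup_schur_card)
qed

lemma lookup_schur_hcomp:
  "Poly_Mapping.lookup (schur N mu * hcomp N k) \<alpha> =
     (\<Sum>\<gamma>\<in>exponents N k. int (card {T\<in>ssyt N mu. tab_monomial mu T + \<gamma> = \<alpha>}))"
proof -
  have "schur N mu * hcomp N k = (\<Sum>T\<in>ssyt N mu. \<Sum>\<gamma>\<in>exponents N k. Poly_Mapping.single (tab_monomial mu T + \<gamma>) 1)"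
    by (simp add: schur_def hcomp_eq_sum_exponents sum_product mult_single)
  then have "Poly_Mapping.lookup (schur N mu * hcomp N k) \<alpha> =
      (\<Sum>T\<in>ssyt N mu. \<Sum>\<gamma>\<in>exponents N k. (1::int) when tab_monomial mu T + \<gamma> = \<alpha>)"
    by (auto simp: lookup_sum lookup_single when_def intro!: sum.cong)
  also have "\<dots> = (\<Sum>\<gamma>\<in>exponents N k. \<Sum>T\<in>ssyt N mu. (1::int) when tab_monomial mu T + \<gamma> = \<alpha>)"
    by (rule sum.swap)
  also have "\<dots> = (\<Sum>\<gamma>\<in>exponents N k. int (card {T\<in>ssyt N mu. tab_monomial mu T + \<gamma> = \<alpha>}))"
    by (intro sum.cong refl sum_when_card finite_ssyt)
  finally show ?thesis .
qed

lemma lookup_exponents_le: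
  "Poly_Mapping.lookup ` {\<gamma>\<in>exponents N k. \<forall>i. Poly_Mapping.lookup \<gamma> i \<le> a i} = bounded_comps N a k"
    (is "Poly_Mapping.lookup ` ?S = _")
proof
  show "Poly_Mapping.lookup ` ?S \<subseteq> bounded_comps N a k"
    by (auto simp: exponents_iff bounded_comps_def vanishes_from_def)
  show "bounded_comps N a k \<subseteq> Poly_Mapping.lookup ` ?S"
  proof
    fix g assume g: "g \<in> bounded_comps N a k"
    then have "{i. g i \<noteq> 0} \<subseteq> {..<N}"
      by (auto simp: bounded_comps_def not_less[symmetric])
    then have lookup_g: "Poly_Mapping.lookup (Abs_poly_mapping g) = g"
      using finite_subset by (metis Abs_poly_mapping_inverse finite_lessThan mem_Collect_eq)
    have "g i \<le> a i" for i using g by (cases "i < N") (auto simp: bounded_comps_def)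
    moreover have "Abs_poly_mapping g \<in> exponents N k"
      using g unfolding exponents_iff lookup_g by (simp add: bounded_comps_def vanishes_from_def)
    ultimately have "Abs_poly_mapping g \<in> ?S" by (simp add: lookup_g)
    then show "g \<in> Poly_Mapping.lookup ` ?S"
      by (rule image_eqI[of g Poly_Mapping.lookup, OF lookup_g[symmetric]])
  qed
qed

lemma lookup_schur_hcomp_kostka:
  assumes "vanishes_from N (Poly_Mapping.lookup \<alpha>)"
  shows "Poly_Mapping.lookup (schur N mu * hcomp N k) \<alpha> =
    int (\<Sum>g\<in>bounded_comps N (Poly_Mapping.lookup \<alpha>) k. kostka N (pad mu) (\<lambda>i. Poly_Mapping.lookup \<alpha> i - g i))"
proof -
  let ?a = "Poly_Mapping.lookup \<alpha>"
  let ?S = "{\<gamma>\<in>exponents N k. \<forall>i. Poly_Mapping.lookup \<gamma> i \<le> ?a i}"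
  have "Poly_Mapping.lookup (schur N mu * hcomp N k) \<alpha>
      = (\<Sum>\<gamma>\<in>exponents N k. if \<forall>i. Poly_Mapping.lookup \<gamma> i \<le> ?a i
           then int (kostka N (pad mu) (\<lambda>i. ?a i - Poly_Mapping.lookup \<gamma> i)) else 0)"
    unfolding lookup_schur_hcomp using assms
    by (intro sum.cong refl) (simp add: card_tab_monomial_add exponents_iff)
  also have "\<dots> = (\<Sum>\<gamma>\<in>?S. int (kostka N (pad mu) (\<lambda>i. ?a i - Poly_Mapping.lookup \<gamma> i)))"
    by (simp add: sum.inter_filter[OF finite_exponents])
  also have "\<dots> = (\<Sum>g\<in>bounded_comps N ?a k. int (kostka N (pad mu) (\<lambda>i. ?a i - g i)))"
    using sum.reindex[of Poly_Mapping.lookup ?S "\<lambda>g. int (kostka N (pad mu) (\<lambda>i. ?a i - g i))"]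
    by (simp add: lookup_exponents_le inj_on_def poly_mapping_eqI)
  finally show ?thesis by simp
qed

definition pieri_shapes :: "nat list \<Rightarrow> nat \<Rightarrow> nat list set" where
  "pieri_shapes mu k = {la. is_partition la \<and> hstrip (pad la) (pad mu) \<and> sum_list la = sum_list mu + k}"

lemma pad_pieri_shapes:
  assumes mu: "is_partition mu"
  shows "pad ` pieri_shapes mu k = outer_strips (Suc (length mu)) (pad mu) k" and "inj_on pad (pieri_shapes mu k)"
proof -
  let ?L = "length mu"
  have bmu: "vanishes_from ?L (pad mu)" by (rule vanishes_from_pad) simp
  show "inj_on pad (pieri_shapes mu k)" unfolding inj_on_def pieri_shapes_def using pad_inj by blast
  show "pad ` pieri_shapes mu k = outer_strips (Suc ?L) (pad mu) k"
  proof
    show "pad ` pieri_shapes mu k \<subseteq> outer_strips (Suc ?L) (pad mu) k"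
    proof safe
      fix la assume la: "la \<in> pieri_shapes mu k"
      then have p: "is_partition la" and h: "hstrip (pad la) (pad mu)" and s: "sum_list la = sum_list mu + k"
        by (auto simp: pieri_shapes_def)
      have "vanishes_from (Suc ?L) (pad la)" using hstrip_vanishes_from_Suc[OF h bmu] .
      then have "length la \<le> Suc ?L" using pad_pos[OF p] by (metis vanishes_from_def not_le less_irrefl)
      then show "pad la \<in> outer_strips (Suc ?L) (pad mu) k"
        using h s sum_list_pad[of la "Suc ?L"] sum_list_pad[of mu "Suc ?L"] by (simp add: outer_strips_def)
    qed
    show "outer_strips (Suc ?L) (pad mu) k \<subseteq> pad ` pieri_shapes mu k"
    proof
      fix f assume f: "f \<in> outer_strips (Suc ?L) (pad mu) k"
      have "partition_fun (Suc ?L) f" using outer_strips_partition_fun[OF f bmu] .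
      then obtain la where la: "is_partition la" "length la \<le> Suc ?L" "pad la = f" using pad_surj by blast
      have "la \<in> pieri_shapes mu k" using f la sum_list_pad[of la "Suc ?L"] sum_list_pad[of mu "Suc ?L"]
        by (auto simp: outer_strips_def pieri_shapes_def)
      then show "f \<in> pad ` pieri_shapes mu k" using la by blast
    qed
  qed
qed

lemma pieri_rule:
  assumes mu: "is_partition mu"
  shows "schur N mu * hcomp N k = (\<Sum>la\<in>pieri_shapes mu k. schur N la)"
proof (rule poly_mapping_eqI)
  fix \<alpha> :: "nat \<Rightarrow>\<^sub>0 nat"
  let ?a = "Poly_Mapping.lookup \<alpha>"
  show "Poly_Mapping.lookup (schur N mu * hcomp N k) \<alpha> = Poly_Mapping.lookup (\<Sum>la\<in>pieri_shapes mu k. schur N la) \<alpha>"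
  proof (cases "vanishes_from N ?a")
    case True
    have "Poly_Mapping.lookup (schur N mu * hcomp N k) \<alpha>
        = int (\<Sum>g\<in>bounded_comps N ?a k. kostka N (pad mu) (\<lambda>i. ?a i - g i))"
      by (rule lookup_schur_hcomp_kostka[OF True])
    also have "\<dots> = int (\<Sum>f\<in>outer_strips (Suc (length mu)) (pad mu) k. kostka N f ?a)"
      using kostka_pieri[OF partition_fun_pad[OF mu order_refl]] by simp
    also have "\<dots> = int (\<Sum>la\<in>pieri_shapes mu k. kostka N (pad la) ?a)"
      using sum.reindex[OF pad_pieri_shapes(2)[OF mu], of "\<lambda>f. kostka N f ?a"] pad_pieri_shapes(1)[OF mu] by simp
    also have "\<dots> = Poly_Mapping.lookup (\<Sum>la\<in>pieri_shapes mu k. schur N la) \<alpha>"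
      using True by (simp add: lookup_sum lookup_schur)
    finally show ?thesis .
  next
    case False
    then show ?thesis
      by (simp add: lookup_schur_hcomp card_tab_monomial_add exponents_iff lookup_sum lookup_schur)
  qed
qed

section \<open>Linear independence of Schur tensors\<close>

lemma card_diagram_rows:
  assumes "vanishes_from L f"
  shows "card {c\<in>diagram f. fst c \<le> r} = sum f {..r}"
proof -
  have "{c\<in>diagram f. fst c \<le> r} = Sigma {..r} (\<lambda>i. {..<f i})" by (auto simp: diagram_def)
  then show ?thesis by (simp add: card_SigmaI)
qed

lemma card_entries_le:
  assumes "vanishes_from L f"
  shows "card {c\<in>diagram f. T c \<le> r} = (\<Sum>v\<le>r. content f T v)"
proof (induction r)
  case 0 then show ?case by (simp add: content_def)
next
  case (Suc r)
  have fin: "finite (diagram f)" using finite_diagram[OF assms] .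
  have "{c\<in>diagram f. T c \<le> Suc r} = {c\<in>diagram f. T c \<le> r} \<union> {c\<in>diagram f. T c = Suc r}" by auto
  moreover have "{c\<in>diagram f. T c \<le> r} \<inter> {c\<in>diagram f. T c = Suc r} = {}" by auto
  ultimately have "card {c\<in>diagram f. T c \<le> Suc r} = card {c\<in>diagram f. T c \<le> r} + card {c\<in>diagram f. T c = Suc r}"
    using fin by (simp add: card_Un_disjoint)
  then show ?case using Suc.IH by (simp add: content_def)
qed

lemma entries_le_subset_rows:
  assumes "T \<in> tableaux N f" "partition_fun L f"
  shows "{c\<in>diagram f. T c \<le> r} \<subseteq> {c\<in>diagram f. fst c \<le> r}"
proof
  fix c assume c: "c \<in> {c\<in>diagram f. T c \<le> r}"
  obtain i j where cij: "c = (i, j)" by (cases c)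
  have "i \<le> T (i, j)" using tableau_col_ge[OF assms(1)] assms(2) c cij by (auto simp: partition_fun_def)
  then show "c \<in> {c\<in>diagram f. fst c \<le> r}" using c cij by auto
qed

lemma content_dominated:
  assumes "T \<in> tableaux N f" "partition_fun L f" "\<forall>v. content f T v = g v"
  shows "sum g {..r} \<le> sum f {..r}"
proof -
  have bf: "vanishes_from L f" using assms(2) by (simp add: partition_fun_def)
  have "sum g {..r} = card {c\<in>diagram f. T c \<le> r}" using card_entries_le[OF bf] assms(3) by simp
  also have "\<dots> \<le> card {c\<in>diagram f. fst c \<le> r}"
    by (rule card_mono) (use finite_diagram[OF bf] entries_le_subset_rows[OF assms(1,2)] in auto)
  also have "\<dots> = sum f {..r}" by (rule card_diagram_rows[OF bf])
  finally show ?thesis .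
qed

lemma content_all:
  assumes "T \<in> tableaux N f" "vanishes_from N g" "\<forall>v<N. content f T v = g v"
  shows "\<forall>v. content f T v = g v"
proof
  fix v show "content f T v = g v"
  proof (cases "v < N")
    case True then show ?thesis using assms(3) by simp
  next
    case False then show ?thesis using content_ge[OF assms(1)] assms(2) by (simp add: vanishes_from_def)
  qed
qed

definition superstandard :: "(nat \<Rightarrow> nat) \<Rightarrow> nat \<times> nat \<Rightarrow> nat" where
  "superstandard f c = (if c \<in> diagram f then fst c else 0)"

lemma superstandard_in_tableaux:
  assumes "partition_fun N f"
  shows "superstandard f \<in> tableaux N f"
proof -
  have bf: "vanishes_from N f" and anti: "\<And>i. f (Suc i) \<le> f i"
    using assms by (auto simp: partition_fun_def)
  have "i < N" if "(i, j) \<in> diagram f" for i j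
  proof (rule ccontr)
    assume "\<not> i < N"
    then have "f i = 0" using bf by (simp add: vanishes_from_def)
    then show False using that by (simp add: diagram_def)
  qed
  moreover have "(i, j) \<in> diagram f" if "(Suc i, j) \<in> diagram f" for i j
    using that anti[of i] by (simp add: diagram_def)
  ultimately show ?thesis
    by (auto simp: tableaux_def superstandard_def diagram_def)
qed

lemma content_superstandard: "content f (superstandard f) v = f v"
proof -
  have "{c\<in>diagram f. superstandard f c = v} = {v} \<times> {..<f v}"
    by (auto simp: superstandard_def diagram_def)
  then show ?thesis by (simp add: content_def)
qed

text \<open>A tableau whose content equals its shape has only entries i in row i: the entries at most r
  are as many as the cells in rows 0..r, and all lie there.\<close>

lemma tableau_content_shape_eq_superstandard:
  assumes T: "T \<in> tableaux N f" and f: "partition_fun N f" and content: "\<forall>v<N. content f T v = f v"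
  shows "T = superstandard f"
proof
  fix c
  show "T c = superstandard f c"
  proof (cases "c \<in> diagram f")
    case False then show ?thesis using T by (simp add: tableaux_outside superstandard_def)
  next
    case True
    obtain r j where c: "c = (r, j)" by (cases c)
    have bf: "vanishes_from N f" using f by (simp add: partition_fun_def)
    have "card {c\<in>diagram f. T c \<le> r} = sum f {..r}"
      using card_entries_le[OF bf] content_all[OF T bf content] by simp
    also have "\<dots> = card {c\<in>diagram f. fst c \<le> r}" using card_diagram_rows[OF bf] by simp
    finally have "{c\<in>diagram f. T c \<le> r} = {c\<in>diagram f. fst c \<le> r}"
      using card_subset_eq[OF _ entries_le_subset_rows[OF T f]] finite_diagram[OF bf] by simp
    moreover have "c \<in> {c\<in>diagram f. fst c \<le> r}" using True c by simp
    ultimately have "T c \<le> r" by blast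
    moreover have "r \<le> T c"
      using tableau_col_ge[OF T, of r j] f True c by (simp add: partition_fun_def)
    ultimately show ?thesis using True c by (simp add: superstandard_def)
  qed
qed

lemma kostka_diag:
  assumes "partition_fun N f"
  shows "kostka N f f = 1"
proof -
  have "{T\<in>tableaux N f. \<forall>v<N. content f T v = f v} = {superstandard f}"
    using tableau_content_shape_eq_superstandard[OF _ assms] superstandard_in_tableaux[OF assms]
      content_superstandard by blast
  then show ?thesis by (simp add: kostka_def)
qed

lemma kostka_nonzero_dominated:
  assumes "kostka N f g \<noteq> 0" "partition_fun L f" "vanishes_from N g"
  shows "sum g {..r} \<le> sum f {..r}"
proof -
  have "{T\<in>tableaux N f. \<forall>v<N. content f T v = g v} \<noteq> {}" using assms(1) unfolding kostka_def by (metis card.empty)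
  then obtain T where T: "T \<in> tableaux N f" "\<forall>v<N. content f T v = g v" by blast
  show ?thesis using content_dominated[OF T(1) assms(2) content_all[OF T(1) assms(3) T(2)]] .
qed

definition dominance_weight :: "nat \<Rightarrow> (nat \<Rightarrow> nat) \<Rightarrow> nat" where
  "dominance_weight N f = (\<Sum>r<N. sum f {..r})"

lemma dominance_weight_mono: "\<forall>r. sum g {..r} \<le> sum f {..r} \<Longrightarrow> dominance_weight N g \<le> dominance_weight N f"
  unfolding dominance_weight_def by (rule sum_mono) auto

lemma dominance_weight_strict:
  assumes "\<forall>r. sum g {..r} \<le> sum f {..r}" "vanishes_from N f" "vanishes_from N g" "f \<noteq> g"
  shows "dominance_weight N g < dominance_weight N f"
proof -
  have "\<exists>i. f i \<noteq> g i" using assms(4) by auto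
  define i0 where "i0 = (LEAST i. f i \<noteq> g i)"
  have ne: "f i0 \<noteq> g i0" unfolding i0_def by (rule LeastI_ex) fact
  have eq: "i < i0 \<Longrightarrow> f i = g i" for i unfolding i0_def using not_less_Least by blast
  have i0N: "i0 < N" using ne assms(2,3) by (metis vanishes_from_def not_le)
  have se: "sum f {..<i0} = sum g {..<i0}" by (rule sum.cong) (auto simp: eq)
  have "sum g {..i0} \<le> sum f {..i0}" using assms(1) by blast
  then have "g i0 \<le> f i0" using se by (simp add: lessThan_Suc_atMost[symmetric])
  then have "g i0 < f i0" using ne by simp
  then have strict: "sum g {..i0} < sum f {..i0}" using se by (simp add: lessThan_Suc_atMost[symmetric])
  have c1: "\<forall>x\<in>{..<N}. sum g {..x} \<le> sum f {..x}" using assms(1) by blast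
  have c2: "\<exists>a\<in>{..<N}. sum g {..a} < sum f {..a}" using strict i0N by blast
  show ?thesis unfolding dominance_weight_def
    by (rule sum_strict_mono_ex1[OF finite_lessThan c1 c2])
qed

definition shape_monomial :: "nat list \<Rightarrow> (nat \<Rightarrow>\<^sub>0 nat)" where
  "shape_monomial la = Abs_poly_mapping (pad la)"

lemma lookup_shape_monomial: "Poly_Mapping.lookup (shape_monomial la) = pad la"
proof -
  have "{i. pad la i \<noteq> 0} \<subseteq> {..<length la}" by (auto simp: pad_def split: if_splits)
  then have "finite {i. pad la i \<noteq> 0}" using finite_subset by blast
  then show ?thesis by (simp add: shape_monomial_def)
qed

lemma schur_basisD: "la \<in> schur_basis N \<Longrightarrow> is_partition la \<and> length la \<le> N"
  by (simp add: schur_basis_def)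

lemma lookup_schur_shape_monomial: "la \<in> schur_basis N \<Longrightarrow> Poly_Mapping.lookup (schur N la) (shape_monomial la) = 1"
proof -
  assume "la \<in> schur_basis N"
  then have p: "is_partition la" and l: "length la \<le> N" using schur_basisD by auto
  have b: "vanishes_from N (pad la)" using vanishes_from_pad[OF l] .
  have k: "kostka N (pad la) (pad la) = 1" using kostka_diag[OF partition_fun_pad[OF p l]] .
  have "Poly_Mapping.lookup (schur N la) (shape_monomial la) = (if vanishes_from N (pad la) then int (kostka N (pad la) (pad la)) else 0)"
    using lookup_schur[of N la "shape_monomial la"] by (simp only: lookup_shape_monomial)
  then show ?thesis using b k by simp
qed

lemma lookup_schur_nonzero_weight:
  assumes la: "la \<in> schur_basis N" and mu: "mu \<in> schur_basis N"
    and nonzero: "Poly_Mapping.lookup (schur N la) (shape_monomial mu) \<noteq> 0"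
  shows "dominance_weight N (pad mu) \<le> dominance_weight N (pad la)"
    and "la \<noteq> mu \<Longrightarrow> dominance_weight N (pad mu) < dominance_weight N (pad la)"
proof -
  have la': "is_partition la" "length la \<le> N" and mu': "is_partition mu" "length mu \<le> N"
    using la mu by (auto simp: schur_basis_def)
  have "kostka N (pad la) (pad mu) \<noteq> 0"
    using nonzero lookup_schur[of N la "shape_monomial mu"] vanishes_from_pad[OF mu'(2)]
    by (simp add: lookup_shape_monomial)
  then have dom: "\<forall>r. sum (pad mu) {..r} \<le> sum (pad la) {..r}"
    using kostka_nonzero_dominated[OF _ partition_fun_pad[OF la'] vanishes_from_pad[OF mu'(2)]] by blast
  then show "dominance_weight N (pad mu) \<le> dominance_weight N (pad la)"
    by (rule dominance_weight_mono)
  assume "la \<noteq> mu"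
  then have "pad la \<noteq> pad mu" using pad_inj la'(1) mu'(1) by blast
  then show "dominance_weight N (pad mu) < dominance_weight N (pad la)"
    using dominance_weight_strict[OF dom vanishes_from_pad[OF la'(2)] vanishes_from_pad[OF mu'(2)]] by blast
qed

definition pair_weight :: "nat \<Rightarrow> nat list \<times> nat list \<Rightarrow> nat" where
  "pair_weight N p = dominance_weight N (pad (fst p)) + dominance_weight N (pad (snd p))"

abbreviation schur_tensor :: "nat \<Rightarrow> nat list \<times> nat list \<Rightarrow> (nat \<Rightarrow>\<^sub>0 nat) \<times> (nat \<Rightarrow>\<^sub>0 nat) \<Rightarrow> int" where
  "schur_tensor N p \<equiv> tensor (schur N (fst p)) (schur N (snd p))"

abbreviation pair_monomial :: "nat list \<times> nat list \<Rightarrow> (nat \<Rightarrow>\<^sub>0 nat) \<times> (nat \<Rightarrow>\<^sub>0 nat)" where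
  "pair_monomial p \<equiv> (shape_monomial (fst p), shape_monomial (snd p))"

lemma schur_tensor_pair_monomial_self:
  "p \<in> schur_basis N \<times> schur_basis N \<Longrightarrow> schur_tensor N p (pair_monomial p) = 1"
  by (auto simp: tensor_def lookup_schur_shape_monomial)

lemma schur_tensor_pair_monomial_triangular:
  assumes p: "p \<in> schur_basis N \<times> schur_basis N" and q: "q \<in> schur_basis N \<times> schur_basis N"
    and "q \<noteq> p" and "schur_tensor N q (pair_monomial p) \<noteq> 0"
  shows "pair_weight N p < pair_weight N q"
proof -
  have "Poly_Mapping.lookup (schur N (fst q)) (shape_monomial (fst p)) \<noteq> 0"
    and "Poly_Mapping.lookup (schur N (snd q)) (shape_monomial (snd p)) \<noteq> 0"
    using assms(4) by (auto simp: tensor_def)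
  with p q have "dominance_weight N (pad (fst p)) \<le> dominance_weight N (pad (fst q))"
    "fst q \<noteq> fst p \<Longrightarrow> dominance_weight N (pad (fst p)) < dominance_weight N (pad (fst q))"
    "dominance_weight N (pad (snd p)) \<le> dominance_weight N (pad (snd q))"
    "snd q \<noteq> snd p \<Longrightarrow> dominance_weight N (pad (snd p)) < dominance_weight N (pad (snd q))"
    using lookup_schur_nonzero_weight by auto
  moreover have "fst q \<noteq> fst p \<or> snd q \<noteq> snd p" using \<open>q \<noteq> p\<close> by (auto simp: prod_eq_iff)
  ultimately show ?thesis by (auto simp: pair_weight_def)
qed

text \<open>Evaluating at the monomial of a term of maximal weight isolates its coefficient.\<close>

lemma schur_tensors_independent:
  assumes "finite S" and "S \<subseteq> schur_basis N \<times> schur_basis N"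
    and zero: "\<forall>x. (\<Sum>p\<in>S. d p * schur_tensor N p x) = (0::int)"
  shows "\<forall>p\<in>S. d p = 0"
proof (rule ccontr)
  let ?Z = "{p\<in>S. d p \<noteq> 0}"
  assume "\<not> (\<forall>p\<in>S. d p = 0)"
  then have "?Z \<noteq> {}" by auto
  then obtain p0 where p0: "p0 \<in> ?Z" and "Max (pair_weight N ` ?Z) = pair_weight N p0"
    using obtains_MAX[of ?Z] \<open>finite S\<close> by auto
  then have max: "pair_weight N p \<le> pair_weight N p0" if "p \<in> ?Z" for p
    using Max_ge[of "pair_weight N ` ?Z"] that \<open>finite S\<close> by simp
  have "d p * schur_tensor N p (pair_monomial p0) = 0" if p: "p \<in> S - {p0}" for p
  proof (rule ccontr)
    assume nonzero: "d p * schur_tensor N p (pair_monomial p0) \<noteq> 0"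
    then have "pair_weight N p0 < pair_weight N p"
      using schur_tensor_pair_monomial_triangular[of p0 N p] p p0 assms(2) by auto
    moreover have "p \<in> ?Z" using p nonzero by auto
    ultimately show False using max[of p] by simp
  qed
  then have "(\<Sum>p\<in>S - {p0}. d p * schur_tensor N p (pair_monomial p0)) = 0"
    by (intro sum.neutral) blast
  then have "(\<Sum>p\<in>S. d p * schur_tensor N p (pair_monomial p0)) = d p0 * schur_tensor N p0 (pair_monomial p0)"
    using p0 sum.remove[OF \<open>finite S\<close>, of p0 "\<lambda>p. d p * schur_tensor N p (pair_monomial p0)"] by simp
  also have "\<dots> = d p0" using p0 assms(2) schur_tensor_pair_monomial_self by auto
  finally show False using zero p0 by simp
qed

lemma sum_fun_apply: "(\<Sum>i\<in>A. F i) x = (\<Sum>i\<in>A. F i x)"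
  by (induction A rule: infinite_finite_induct) auto

lemma schur_term_apply: "schur_term N c p x = c p * schur_tensor N p x"
  by (simp add: schur_term_def)

lemma schur_expansion_apply:
  assumes "schur_expansion N F c" "finite S" "{p. c p \<noteq> 0} \<subseteq> S"
  shows "F x = (\<Sum>p\<in>S. c p * schur_tensor N p x)"
proof -
  have "F x = (\<Sum>p\<in>{p. c p \<noteq> 0}. c p * schur_tensor N p x)"
    using assms(1) by (simp add: schur_expansion_def sum_fun_apply schur_term_apply)
  also have "\<dots> = (\<Sum>p\<in>S. c p * schur_tensor N p x)"
    by (rule sum.mono_neutral_left[OF assms(2,3)]) auto
  finally show ?thesis .
qed

lemma schur_expansion_unique:
  assumes e1: "schur_expansion N F c1" and e2: "schur_expansion N F c2"
  shows "c1 = c2"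
proof
  let ?S = "{p. c1 p \<noteq> 0} \<union> {p. c2 p \<noteq> 0}"
  have "finite {p. c1 p \<noteq> 0}" "finite {p. c2 p \<noteq> 0}"
    and "\<forall>p. c1 p \<noteq> 0 \<longrightarrow> fst p \<in> schur_basis N \<and> snd p \<in> schur_basis N"
    and "\<forall>p. c2 p \<noteq> 0 \<longrightarrow> fst p \<in> schur_basis N \<and> snd p \<in> schur_basis N"
    using e1 e2 unfolding schur_expansion_def by blast+
  then have finS: "finite ?S" and sub: "?S \<subseteq> schur_basis N \<times> schur_basis N"
    by (auto simp: mem_Times_iff)
  have "(\<Sum>q\<in>?S. (c1 q - c2 q) * schur_tensor N q x) = F x - F x" for x
    using schur_expansion_apply[OF e1 finS, of x] schur_expansion_apply[OF e2 finS, of x]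
    by (simp add: left_diff_distrib sum_subtractf)
  then have "\<forall>x. (\<Sum>q\<in>?S. (c1 q - c2 q) * schur_tensor N q x) = 0"
    by simp
  then have coeffs: "\<forall>q\<in>?S. c1 q - c2 q = 0"
    by (rule schur_tensors_independent[OF finS sub])
  show "c1 p = c2 p" for p
  proof (cases "p \<in> ?S")
    case True
    show ?thesis using bspec[OF coeffs True] by simp
  qed simp
qed

lemma truncate_schur_expansion:
  assumes "schur_expansion N F c"
  shows "truncate N L F = (\<Sum>p\<in>{p. c p \<noteq> 0 \<and> part_first (fst p) \<le> L \<and> part_first (snd p) \<le> L}. schur_term N c p)"
proof -
  have "(THE c. schur_expansion N F c) = c"
    using assms schur_expansion_unique by blast
  then show ?thesis by (simp add: truncate_def)
qed

section \<open>The Schur coefficients of SF_d\<close>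

definition strip_mult :: "nat \<Rightarrow> nat list \<Rightarrow> nat list \<Rightarrow> nat" where
  "strip_mult d la nu = card {mu\<in>partitions_of d. hstrip (pad la) (pad mu) \<and> hstrip (pad nu) (pad mu)}"

lemma partitions_ofD: "la \<in> partitions_of n \<Longrightarrow> is_partition la \<and> sum_list la = n"
  by (simp add: partitions_of_def)

lemma length_partitions_of: "la \<in> partitions_of n \<Longrightarrow> length la \<le> n"
  using length_le_sum_list partitions_ofD by fastforce

lemma finite_partitions_of: "finite (partitions_of n)"
proof -
  have "partitions_of n \<subseteq> {xs. set xs \<subseteq> {..n} \<and> length xs \<le> n}"
  proof
    fix xs assume xs: "xs \<in> partitions_of n"
    have "set xs \<subseteq> {..n}" using member_le_sum_list partitions_ofD[OF xs] by fastforce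
    moreover have "length xs \<le> n" using xs by (rule length_partitions_of)
    ultimately show "xs \<in> {xs. set xs \<subseteq> {..n} \<and> length xs \<le> n}" by simp
  qed
  moreover have "finite {xs. set xs \<subseteq> {..n} \<and> length xs \<le> n}" by (rule finite_lists_length_le) simp
  ultimately show ?thesis using finite_subset by blast
qed

lemma hstrip_length_le:
  assumes "hstrip f (pad mu)" "is_partition mu" "vanishes_from L f"
  shows "length mu \<le> L"
proof (rule ccontr)
  assume "\<not> length mu \<le> L"
  then have "0 < pad mu L" using pad_pos[OF assms(2)] by simp
  moreover have "pad mu L \<le> f L" using assms(1) by (simp add: hstrip_def)
  ultimately show False using assms(3) by (simp add: vanishes_from_def)
qed

lemma strip_mult_eq_card_strip_box:
  assumes la: "la \<in> partitions_of n" and nu: "nu \<in> partitions_of m" and Lb: "n \<le> Lb" "m \<le> Lb"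
  shows "strip_mult d la nu = card {k\<in>strip_box (pad la) (pad nu). psize Lb k = d}"
proof -
  let ?X = "{mu\<in>partitions_of d. hstrip (pad la) (pad mu) \<and> hstrip (pad nu) (pad mu)}"
  let ?Y = "{k\<in>strip_box (pad la) (pad nu). psize Lb k = d}"
  have bla: "vanishes_from Lb (pad la)" using length_partitions_of[OF la] Lb by (intro vanishes_from_pad) simp
  have inj: "inj_on pad ?X" unfolding inj_on_def partitions_of_def using pad_inj by blast
  have "pad ` ?X = ?Y"
  proof
    show "pad ` ?X \<subseteq> ?Y"
    proof safe
      fix mu assume mu: "mu \<in> partitions_of d" "hstrip (pad la) (pad mu)" "hstrip (pad nu) (pad mu)"
      show "pad mu \<in> strip_box (pad la) (pad nu)" using mu by (simp add: strip_box_def)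
      have "length mu \<le> Lb" using hstrip_length_le[OF mu(2) _ bla] partitions_ofD[OF mu(1)] by blast
      then show "psize Lb (pad mu) = d" using sum_list_pad partitions_ofD[OF mu(1)] by metis
    qed
    show "?Y \<subseteq> pad ` ?X"
    proof
      fix k assume k: "k \<in> ?Y"
      have "hstrip (pad la) k" using k by (simp add: strip_box_def)
      then have "partition_fun Lb k" using hstrip_partition_fun bla by blast
      then obtain mu where mu: "is_partition mu" "length mu \<le> Lb" "pad mu = k" using pad_surj by blast
      have "sum_list mu = d" using sum_list_pad[OF mu(2)] mu(3) k by simp
      then have "mu \<in> ?X" using mu k by (simp add: partitions_of_def strip_box_def)
      then show "k \<in> pad ` ?X" using mu(3) by blast
    qed
  qed
  then show ?thesis unfolding strip_mult_def using card_image[OF inj] by simp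
qed

lemma sum_card_fibers:
  assumes "finite X" "finite D"
  shows "(\<Sum>d\<in>D. card {k\<in>X. h k = d}) = card {k\<in>X. h k \<in> D}"
  using assms(2)
proof (induction D rule: finite_induct)
  case empty then show ?case by simp
next
  case (insert d D)
  have "{k\<in>X. h k \<in> insert d D} = {k\<in>X. h k = d} \<union> {k\<in>X. h k \<in> D}" by auto
  moreover have "{k\<in>X. h k = d} \<inter> {k\<in>X. h k \<in> D} = {}" using insert.hyps by auto
  ultimately have "card {k\<in>X. h k \<in> insert d D} = card {k\<in>X. h k = d} + card {k\<in>X. h k \<in> D}"
    using assms(1) by (simp add: card_Un_disjoint)
  then show ?case using insert by simp
qed

lemma sum_if_card_fibers:
  assumes "finite X" "finite D"
  shows "(\<Sum>d\<in>D. if P d then card {k\<in>X. h k = d} else 0) = card {k\<in>X. h k \<in> {d\<in>D. P d}}"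
proof -
  have "(\<Sum>d\<in>D. if P d then card {k\<in>X. h k = d} else 0) = (\<Sum>d\<in>{d\<in>D. P d}. card {k\<in>X. h k = d})"
    using sum.inter_filter[OF assms(2), of "\<lambda>d. card {k\<in>X. h k = d}" P] by simp
  also have "\<dots> = card {k\<in>X. h k \<in> {d\<in>D. P d}}" by (rule sum_card_fibers[OF assms(1)]) (use assms(2) in simp)
  finally show ?thesis .
qed

lemma part_first_pad: "is_partition la \<Longrightarrow> part_first la = pad la 0"
  by (cases la) (auto simp: part_first_def pad_def)

lemma pad_partitions_of:
  assumes "la \<in> partitions_of n" "n \<le> L"
  shows "vanishes_from L (pad la)" "psize L (pad la) = n"
  using length_partitions_of[OF assms(1)] assms partitions_ofD[OF assms(1)]
  by (auto intro: vanishes_from_pad simp: sum_list_pad[symmetric])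

lemma strip_mult_truncation_identity:
  assumes la: "la \<in> partitions_of n" and nu: "nu \<in> partitions_of m" and "0 < n" "0 < m"
  shows "(\<Sum>d\<in>{0..min m n}. if max (part_first la) (part_first nu) \<le> n + m - 2 * d then strip_mult d la nu else 0)
       + (\<Sum>d\<in>{0..<min m n}. if max (part_first la) (part_first nu) \<le> n + m - 2 * d - 1 then strip_mult d la nu else 0)
       = (\<Sum>d\<in>{0..min m n}. strip_mult d la nu)"
proof -
  let ?L = "max n m" and ?A = "pad la" and ?B = "pad nu"
  let ?X = "strip_box ?A ?B" and ?M = "max (part_first la) (part_first nu)"
  let ?S = "n + m - ?M"
  have bA: "vanishes_from ?L ?A" and szA: "psize ?L ?A = n"
    and bB: "vanishes_from ?L ?B" and szB: "psize ?L ?B = m"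
    using pad_partitions_of la nu by auto
  have finX: "finite ?X" by (rule finite_strip_box[OF bA])
  have M: "?M = max (?A 0) (?B 0)" using part_first_pad partitions_ofD la nu by simp
  have "?A 0 \<le> n" "?B 0 \<le> m" using le_psize[of 0 ?L ?A] le_psize[of 0 ?L ?B] szA szB \<open>0 < n\<close> by auto
  moreover have "0 < ?A 0" using pad_pos partitions_ofD[OF la] \<open>0 < n\<close> by fastforce
  ultimately have M_bounds: "1 \<le> ?M" "?M \<le> n + m" using M by auto
  have fiber: "strip_mult d la nu = card {k\<in>?X. psize ?L k = d}" for d
    using strip_mult_eq_card_strip_box[OF la nu] by simp
  have small: "psize ?L k \<le> min m n" if "k \<in> ?X" for k
    using psize_strip_box_le_sides[OF that, of ?L] szA szB by simp
  have reflect: "psize ?L (box_reflect ?A ?B k) = ?S - psize ?L k" "box_reflect ?A ?B k \<in> ?X" if "k \<in> ?X" for k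
    using psize_box_reflect[OF that bA bB] box_reflect_in[OF that] szA szB M by auto
  have "(\<Sum>d\<in>{0..min m n}. if ?M \<le> n + m - 2 * d then strip_mult d la nu else 0)
      = card {k\<in>?X. psize ?L k \<in> {d\<in>{0..min m n}. ?M \<le> n + m - 2 * d}}"
    unfolding fiber by (rule sum_if_card_fibers[OF finX]) simp
  also have "\<dots> = card {k\<in>?X. 2 * psize ?L k \<le> ?S}"
  proof -
    have "{k\<in>?X. psize ?L k \<in> {d\<in>{0..min m n}. ?M \<le> n + m - 2 * d}} = {k\<in>?X. 2 * psize ?L k \<le> ?S}"
      using small M_bounds by auto
    then show ?thesis by simp
  qed
  finally have low: "(\<Sum>d\<in>{0..min m n}. if ?M \<le> n + m - 2 * d then strip_mult d la nu else 0)
      = card {k\<in>?X. 2 * psize ?L k \<le> ?S}" .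
  \<comment> \<open>Below the middle size the bound d < min m n is automatic, since the reflection of k
    has size at most min m n.\<close>
  have "psize ?L k < min m n" if "k \<in> ?X" "2 * psize ?L k < ?S" for k
    using small[OF reflect(2)[OF that(1)]] reflect(1)[OF that(1)] that(2) by linarith
  then have high_set: "{k\<in>?X. psize ?L k \<in> {d\<in>{0..<min m n}. ?M \<le> n + m - 2 * d - 1}}
      = {k\<in>?X. 2 * psize ?L k < ?S}"
    using M_bounds by auto
  have "(\<Sum>d\<in>{0..<min m n}. if ?M \<le> n + m - 2 * d - 1 then strip_mult d la nu else 0)
      = card {k\<in>?X. psize ?L k \<in> {d\<in>{0..<min m n}. ?M \<le> n + m - 2 * d - 1}}"
    unfolding fiber by (rule sum_if_card_fibers[OF finX]) simp
  also have "\<dots> = card {k\<in>?X. 2 * psize ?L k < ?S}"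
    by (simp only: high_set)
  moreover have "(\<Sum>d\<in>{0..min m n}. strip_mult d la nu) = card ?X"
  proof -
    have "{k\<in>?X. psize ?L k \<in> {0..min m n}} = ?X" using small by auto
    then show ?thesis unfolding fiber using sum_card_fibers[OF finX, of "{0..min m n}"] by simp
  qed
  moreover have "card {k\<in>?X. 2 * psize ?L k \<le> ?S} + card {k\<in>?X. 2 * psize ?L k < ?S} = card ?X"
    using card_strip_box_halves[OF bA bB] unfolding szA szB M[symmetric] .
  ultimately show ?thesis
    using low by linarith
qed

lemma tensor_apply: "tensor f g x = Poly_Mapping.lookup f (fst x) * Poly_Mapping.lookup g (snd x)"
  by (cases x) (simp add: tensor_def)

lemma pieri_shapes_eq: "mu \<in> partitions_of d \<Longrightarrow> d \<le> n \<Longrightarrow> pieri_shapes mu (n - d) = {la\<in>partitions_of n. hstrip (pad la) (pad mu)}"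
  by (auto simp: pieri_shapes_def partitions_of_def)

lemma lookup_pieri_rule:
  assumes "mu \<in> partitions_of d" "d \<le> n"
  shows "Poly_Mapping.lookup (schur N mu * hcomp N (n - d)) a =
    (\<Sum>la\<in>partitions_of n. if hstrip (pad la) (pad mu) then Poly_Mapping.lookup (schur N la) a else 0)"
proof -
  have p: "is_partition mu" using assms(1) partitions_ofD by blast
  have "Poly_Mapping.lookup (schur N mu * hcomp N (n - d)) a = (\<Sum>la\<in>pieri_shapes mu (n - d). Poly_Mapping.lookup (schur N la) a)"
    by (simp add: pieri_rule[OF p] lookup_sum)
  also have "\<dots> = (\<Sum>la\<in>{la\<in>partitions_of n. hstrip (pad la) (pad mu)}. Poly_Mapping.lookup (schur N la) a)"
    by (simp add: pieri_shapes_eq[OF assms])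
  also have "\<dots> = (\<Sum>la\<in>partitions_of n. if hstrip (pad la) (pad mu) then Poly_Mapping.lookup (schur N la) a else 0)"
    by (rule sum.inter_filter[OF finite_partitions_of])
  finally show ?thesis .
qed

lemma int_strip_mult:
  "int (strip_mult d la nu)
     = (\<Sum>mu\<in>partitions_of d. if hstrip (pad la) (pad mu) \<and> hstrip (pad nu) (pad mu) then 1 else 0)"
  using sum_when_card[OF finite_partitions_of[of d], where 'a = int and P = "\<lambda>mu. hstrip (pad la) (pad mu) \<and> hstrip (pad nu) (pad mu)"]
  by (simp add: strip_mult_def when_def)

lemma SF_apply:
  assumes "d \<le> n" and "d \<le> m"
  shows "SF N n m d x = (\<Sum>p\<in>partitions_of n \<times> partitions_of m. int (strip_mult d (fst p) (snd p)) * schur_tensor N p x)"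
proof -
  let ?Pd = "partitions_of d" and ?Pn = "partitions_of n" and ?Pm = "partitions_of m"
  let ?s = "\<lambda>la a. Poly_Mapping.lookup (schur N la) a"
  let ?A = "\<lambda>la nu mu. if hstrip (pad la) (pad mu) \<and> hstrip (pad nu) (pad mu) then 1 else 0"
  obtain a b where x: "x = (a, b)" by (cases x)
  have "SF N n m d x = (\<Sum>mu\<in>?Pd. Poly_Mapping.lookup (schur N mu * hcomp N (n - d)) a
                                 * Poly_Mapping.lookup (schur N mu * hcomp N (m - d)) b)"
    by (simp add: SF_def sum_fun_apply tensor_apply x)
  also have "\<dots> = (\<Sum>mu\<in>?Pd. (\<Sum>la\<in>?Pn. if hstrip (pad la) (pad mu) then ?s la a else 0)
                         * (\<Sum>nu\<in>?Pm. if hstrip (pad nu) (pad mu) then ?s nu b else 0))"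
    using assms by (intro sum.cong refl) (simp add: lookup_pieri_rule)
  also have "\<dots> = (\<Sum>mu\<in>?Pd. \<Sum>la\<in>?Pn. \<Sum>nu\<in>?Pm.
       (if hstrip (pad la) (pad mu) then ?s la a else 0) * (if hstrip (pad nu) (pad mu) then ?s nu b else 0))"
    by (simp add: sum_product)
  also have "\<dots> = (\<Sum>mu\<in>?Pd. \<Sum>la\<in>?Pn. \<Sum>nu\<in>?Pm. ?A la nu mu * (?s la a * ?s nu b))"
    by (intro sum.cong refl) simp
  also have "\<dots> = (\<Sum>la\<in>?Pn. \<Sum>nu\<in>?Pm. \<Sum>mu\<in>?Pd. ?A la nu mu * (?s la a * ?s nu b))"
    by (subst sum.swap) (intro sum.cong refl sum.swap)
  also have "\<dots> = (\<Sum>la\<in>?Pn. \<Sum>nu\<in>?Pm. int (strip_mult d la nu) * (?s la a * ?s nu b))"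
    by (simp add: int_strip_mult sum_distrib_right)
  also have "\<dots> = (\<Sum>p\<in>?Pn \<times> ?Pm. int (strip_mult d (fst p) (snd p)) * schur_tensor N p x)"
    by (simp add: sum.cartesian_product case_prod_beta tensor_apply x)
  finally show ?thesis .
qed

definition SF_coeff :: "nat \<Rightarrow> nat \<Rightarrow> nat \<Rightarrow> nat list \<times> nat list \<Rightarrow> int" where
  "SF_coeff n m d p = (if p \<in> partitions_of n \<times> partitions_of m then int (strip_mult d (fst p) (snd p)) else 0)"

lemma schur_expansion_SF:
  assumes "d \<le> n" "d \<le> m" "max n m \<le> N"
  shows "schur_expansion N (SF N n m d) (SF_coeff n m d)"
proof -
  let ?PP = "partitions_of n \<times> partitions_of m"
  have sub: "{p. SF_coeff n m d p \<noteq> 0} \<subseteq> ?PP" by (auto simp: SF_coeff_def split: if_splits)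
  have finPP: "finite ?PP" using finite_partitions_of by simp
  have fin: "finite {p. SF_coeff n m d p \<noteq> 0}" using finite_subset[OF sub finPP] .
  have basis: "\<forall>p. SF_coeff n m d p \<noteq> 0 \<longrightarrow> fst p \<in> schur_basis N \<and> snd p \<in> schur_basis N"
  proof (intro allI impI)
    fix p assume "SF_coeff n m d p \<noteq> 0"
    then have "p \<in> ?PP" using sub by blast
    then have "fst p \<in> partitions_of n" "snd p \<in> partitions_of m" by auto
    then show "fst p \<in> schur_basis N \<and> snd p \<in> schur_basis N"
      using length_partitions_of partitions_ofD assms(3) by (fastforce simp: schur_basis_def)
  qed
  have eq: "SF N n m d = (\<Sum>p\<in>{p. SF_coeff n m d p \<noteq> 0}. schur_term N (SF_coeff n m d) p)"
  proof
    fix x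
    have "(\<Sum>p\<in>{p. SF_coeff n m d p \<noteq> 0}. schur_term N (SF_coeff n m d) p) x
        = (\<Sum>p\<in>{p. SF_coeff n m d p \<noteq> 0}. SF_coeff n m d p * schur_tensor N p x)"
      by (simp add: sum_fun_apply schur_term_apply)
    also have "\<dots> = (\<Sum>p\<in>?PP. SF_coeff n m d p * schur_tensor N p x)"
      by (rule sum.mono_neutral_left[OF finPP sub]) auto
    also have "\<dots> = (\<Sum>p\<in>?PP. int (strip_mult d (fst p) (snd p)) * schur_tensor N p x)"
      by (rule sum.cong) (auto simp: SF_coeff_def)
    also have "\<dots> = SF N n m d x" using SF_apply[OF assms(1,2)] by simp
    finally show "SF N n m d x = (\<Sum>p\<in>{p. SF_coeff n m d p \<noteq> 0}. schur_term N (SF_coeff n m d) p) x" by simp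
  qed
  show ?thesis unfolding schur_expansion_def using fin basis eq by blast
qed

lemma truncate_SF_apply:
  assumes "d \<le> n" "d \<le> m" "max n m \<le> N"
  shows "truncate N L (SF N n m d) x =
    (\<Sum>p\<in>partitions_of n \<times> partitions_of m.
        if max (part_first (fst p)) (part_first (snd p)) \<le> L then int (strip_mult d (fst p) (snd p)) * schur_tensor N p x else 0)"
proof -
  let ?PP = "partitions_of n \<times> partitions_of m"
  let ?c = "SF_coeff n m d"
  have finPP: "finite ?PP" using finite_partitions_of by simp
  let ?Q = "\<lambda>p. part_first (fst p) \<le> L \<and> part_first (snd p) \<le> L"
  have sub: "{p. ?c p \<noteq> 0 \<and> ?Q p} \<subseteq> {p\<in>?PP. ?Q p}" by (auto simp: SF_coeff_def split: if_splits)
  have "truncate N L (SF N n m d) x = (\<Sum>p\<in>{p. ?c p \<noteq> 0 \<and> ?Q p}. schur_term N ?c p) x"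
    by (simp add: truncate_schur_expansion[OF schur_expansion_SF[OF assms]])
  also have "\<dots> = (\<Sum>p\<in>{p. ?c p \<noteq> 0 \<and> ?Q p}. ?c p * schur_tensor N p x)"
    by (simp add: sum_fun_apply schur_term_apply)
  also have "\<dots> = (\<Sum>p\<in>{p\<in>?PP. ?Q p}. ?c p * schur_tensor N p x)"
    by (rule sum.mono_neutral_left[OF _ sub]) (use finPP in auto)
  also have "\<dots> = (\<Sum>p\<in>?PP. if ?Q p then ?c p * schur_tensor N p x else 0)"
    by (rule sum.inter_filter[OF finPP])
  also have "\<dots> = (\<Sum>p\<in>?PP. if max (part_first (fst p)) (part_first (snd p)) \<le> L then int (strip_mult d (fst p) (snd p)) * schur_tensor N p x else 0)"
    by (rule sum.cong) (auto simp: SF_coeff_def)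
  finally show ?thesis .
qed

lemma sum_truncate_SF_apply:
  assumes "finite D" "\<forall>d\<in>D. d \<le> n \<and> d \<le> m" "max n m \<le> N"
  shows "(\<Sum>d\<in>D. truncate N (f d) (SF N n m d) x) =
    (\<Sum>p\<in>partitions_of n \<times> partitions_of m.
       int (\<Sum>d\<in>D. if max (part_first (fst p)) (part_first (snd p)) \<le> f d then strip_mult d (fst p) (snd p) else 0)
       * schur_tensor N p x)"
proof -
  have "(\<Sum>d\<in>D. truncate N (f d) (SF N n m d) x) =
     (\<Sum>d\<in>D. \<Sum>p\<in>partitions_of n \<times> partitions_of m.
        if max (part_first (fst p)) (part_first (snd p)) \<le> f d
        then int (strip_mult d (fst p) (snd p)) * schur_tensor N p x else 0)"
    using assms(2,3) by (intro sum.cong refl truncate_SF_apply) auto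
  then show ?thesis
    by (simp add: sum.swap[of _ D] sum_distrib_right of_nat_sum if_distrib[of "\<lambda>a. int a * _"] cong: if_cong)
qed

lemma sum_SF_apply:
  assumes "\<forall>d\<in>D. d \<le> n \<and> d \<le> m"
  shows "(\<Sum>d\<in>D. SF N n m d x) =
    (\<Sum>p\<in>partitions_of n \<times> partitions_of m. int (\<Sum>d\<in>D. strip_mult d (fst p) (snd p)) * schur_tensor N p x)"
  using assms by (simp add: SF_apply sum.swap[of _ D] sum_distrib_right of_nat_sum)

theorem mainTheorem5:
  fixes n m N :: nat
  assumes "0 < n" and "0 < m" and "max n m \<le> N"
  shows "(\<Sum>d\<in>{0..min m n}. truncate N (n + m - 2 * d) (SF N n m d))
       + (\<Sum>d\<in>{0..<min m n}. truncate N (n + m - 2 * d - 1) (SF N n m d))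
       = (\<Sum>r\<in>{0..min m n}. SF N n m r)"
proof (rule ext)
  fix x
  let ?P = "partitions_of n \<times> partitions_of m"
  let ?M = "\<lambda>p. max (part_first (fst p)) (part_first (snd p))"
  let ?A = "\<lambda>d p. strip_mult d (fst p) (snd p)"
  let ?T = "\<lambda>p. (\<Sum>d\<in>{0..min m n}. if ?M p \<le> n + m - 2 * d then ?A d p else 0)
                + (\<Sum>d\<in>{0..<min m n}. if ?M p \<le> n + m - 2 * d - 1 then ?A d p else 0)"
  have T: "?T p = (\<Sum>d\<in>{0..min m n}. ?A d p)" if "p \<in> ?P" for p
    using strip_mult_truncation_identity[of "fst p" n "snd p" m] that assms(1,2) by (simp add: mem_Times_iff)
  have "((\<Sum>d\<in>{0..min m n}. truncate N (n + m - 2 * d) (SF N n m d))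
       + (\<Sum>d\<in>{0..<min m n}. truncate N (n + m - 2 * d - 1) (SF N n m d))) x
    = (\<Sum>p\<in>?P. int (?T p) * schur_tensor N p x)"
    using assms(3) by (simp add: sum_fun_apply sum_truncate_SF_apply sum.distrib distrib_right)
  also have "\<dots> = (\<Sum>p\<in>?P. int (\<Sum>d\<in>{0..min m n}. ?A d p) * schur_tensor N p x)"
    using T by simp
  also have "\<dots> = (\<Sum>r\<in>{0..min m n}. SF N n m r) x"
    by (simp add: sum_fun_apply sum_SF_apply)
  finally show "((\<Sum>d\<in>{0..min m n}. truncate N (n + m - 2 * d) (SF N n m d))
       + (\<Sum>d\<in>{0..<min m n}. truncate N (n + m - 2 * d - 1) (SF N n m d))) x
    = (\<Sum>r\<in>{0..min m n}. SF N n m r) x" .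
qed

end
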